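(* Assume that each $q^k$ is entrywise nonnegative, transient and substochastic (Hypothesis RN). Let $\hat s\in S$, let $W\ge1$, and let $C_1,\dots,C_W\in\mathbb R$. If Program 1 is feasible, i.e. there exist nonnegative weights $\alpha^{\delta}$, $\delta\in\Delta$, with $\sum_{\delta}\alpha^{\delta}=1$ and $\sum_{\delta}\alpha^{\delta}V_w^{\delta}(\hat s)\ge C_w$ for $w=1,\dots,W$, then Program 2 is feasible, i.e. there exist nonnegative weights $\alpha^{\pi}$ indexed by the priority rules $\pi$ (rules keyed to some labeling) with $\sum_{\pi}\alpha^{\pi}=1$ and $\sum_{\pi}\alpha^{\pi}V_w^{\pi}(\hat s)\ge C_w$ for $w=1,\dots,W$.
   Context: There are $K$ bandits with pairwise disjoint finite nonempty state sets $N_1,\dots,N_K$; $N=N_1\cup\dots\cup N_K$. Bandit $k$ has transition rates $q(i,j)\ge0$ ($i,j\in N_k$) forming $q^k$; $q^k$ is substochastic if $\sum_{j\in N_k}q(i,j)\le1$ for all $i$, and transient if its powers tend to $0$ entrywise. There are $W+1$ reward types $w=0,1,\dots,W$: each state $i\in N$ has real rewards $r_w(i)$. A multi-state $s$ contains exactly one state $s_k$ of each $N_k$; $S$ is the set of multi-states; $s_{\setminus k}=s\setminus\{s_k\}$. $\Delta$ is the (finite) set of maps $\delta:S\to\{1,\dots,K\}$. For $\delta\in\Delta$: $Q^{\delta}(s,t)=q(s_{\delta(s)},j)$ if $t=s_{\setminus\delta(s)}\cup\{j\}$ with $j\in N_{\delta(s)}$, else $0$; $R_w^{\delta}(s)=r_w(s_{\delta(s)})$;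 $V_w^{\delta}=(I-Q^{\delta})^{-1}R_w^{\delta}$ (well defined since $Q^\delta$ is transient). A labeling is an injective $L:N\cup\{0\}\to\{1,\dots,|N|+1\}$ with $L(0)=|N|+1$; the priority rule keyed to $L$ is the $\pi\in\Delta$ with $\pi(s)=\arg\min_k L(s_k)$. *)

theory Defs
  imports Complex_Main "HOL-Library.FuncSet"
begin

text \<open>Bandit k (for k in {1..K}) has state set N k; states of all bandits live in one type 'a.
  A multi-state is represented extensionally as the function k \<mapsto> s_k on {1..K}.\<close>

definition multistates :: "nat \<Rightarrow> (nat \<Rightarrow> 'a set) \<Rightarrow> (nat \<Rightarrow> 'a) set" where
  "multistates K N = (\<Pi>\<^sub>E k\<in>{1..K}. N k)"

definition all_states :: "nat \<Rightarrow> (nat \<Rightarrow> 'a set) \<Rightarrow> 'a set" where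
  "all_states K N = (\<Union>k\<in>{1..K}. N k)"

fun mat_pow_on :: "'a set \<Rightarrow> ('a \<Rightarrow> 'a \<Rightarrow> real) \<Rightarrow> nat \<Rightarrow> 'a \<Rightarrow> 'a \<Rightarrow> real" where
  "mat_pow_on A q 0 i j = (if i = j then 1 else 0)"
| "mat_pow_on A q (Suc n) i j = (\<Sum>l\<in>A. q i l * mat_pow_on A q n l j)"

definition substochastic_on :: "'a set \<Rightarrow> ('a \<Rightarrow> 'a \<Rightarrow> real) \<Rightarrow> bool" where
  "substochastic_on A q \<longleftrightarrow> (\<forall>i\<in>A. (\<Sum>j\<in>A. q i j) \<le> 1)"

definition transient_on :: "'a set \<Rightarrow> ('a \<Rightarrow> 'a \<Rightarrow> real) \<Rightarrow> bool" where
  "transient_on A q \<longleftrightarrow> (\<forall>i\<in>A. \<forall>j\<in>A. (\<lambda>n. mat_pow_on A q n i j) \<longlonglongrightarrow> 0)"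

definition policies :: "nat \<Rightarrow> (nat \<Rightarrow> 'a set) \<Rightarrow> ((nat \<Rightarrow> 'a) \<Rightarrow> nat) set" where
  "policies K N = (multistates K N \<rightarrow>\<^sub>E {1..K})"

definition Qmat :: "(nat \<Rightarrow> 'a set) \<Rightarrow> ('a \<Rightarrow> 'a \<Rightarrow> real) \<Rightarrow> ((nat \<Rightarrow> 'a) \<Rightarrow> nat)
    \<Rightarrow> (nat \<Rightarrow> 'a) \<Rightarrow> (nat \<Rightarrow> 'a) \<Rightarrow> real" where
  "Qmat N q \<delta> s t =
     (if \<exists>j\<in>N (\<delta> s). t = s(\<delta> s := j) then q (s (\<delta> s)) (t (\<delta> s)) else 0)"

definition Rvec :: "(nat \<Rightarrow> 'a \<Rightarrow> real) \<Rightarrow> nat \<Rightarrow> ((nat \<Rightarrow> 'a) \<Rightarrow> nat) \<Rightarrow> (nat \<Rightarrow> 'a) \<Rightarrow> real" where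
  "Rvec r w \<delta> s = r w (s (\<delta> s))"

definition Vval :: "nat \<Rightarrow> (nat \<Rightarrow> 'a set) \<Rightarrow> ('a \<Rightarrow> 'a \<Rightarrow> real) \<Rightarrow> (nat \<Rightarrow> 'a \<Rightarrow> real)
    \<Rightarrow> nat \<Rightarrow> ((nat \<Rightarrow> 'a) \<Rightarrow> nat) \<Rightarrow> (nat \<Rightarrow> 'a) \<Rightarrow> real" where
  "Vval K N q r w \<delta> =
     (THE V. V \<in> extensional (multistates K N) \<and>
        (\<forall>s\<in>multistates K N.
            V s - (\<Sum>t\<in>multistates K N. Qmat N q \<delta> s t * V t) = Rvec r w \<delta> s))"

text \<open>Labelings: injective L on N \<union> {0} into {1..|N|+1} with L(0) = |N|+1; the extra state 0
  is represented by None, a genuine state i by Some i.\<close>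
definition labeling :: "nat \<Rightarrow> (nat \<Rightarrow> 'a set) \<Rightarrow> ('a option \<Rightarrow> nat) \<Rightarrow> bool" where
  "labeling K N L \<longleftrightarrow>
     inj_on L (insert None (Some ` all_states K N)) \<and>
     L ` (insert None (Some ` all_states K N)) \<subseteq> {1..card (all_states K N) + 1} \<and>
     L None = card (all_states K N) + 1"

definition priority_rule :: "nat \<Rightarrow> (nat \<Rightarrow> 'a set) \<Rightarrow> ('a option \<Rightarrow> nat) \<Rightarrow> (nat \<Rightarrow> 'a) \<Rightarrow> nat" where
  "priority_rule K N L = (\<lambda>s\<in>multistates K N.
      THE k. k \<in> {1..K} \<and> (\<forall>k'\<in>{1..K}. k' \<noteq> k \<longrightarrow> L (Some (s k)) < L (Some (s k'))))"

definition priority_rules :: "nat \<Rightarrow> (nat \<Rightarrow> 'a set) \<Rightarrow> ((nat \<Rightarrow> 'a) \<Rightarrow> nat) set" where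
  "priority_rules K N = {priority_rule K N L | L. labeling K N L}"

end

theory Submission
  imports Defs "Jordan_Normal_Form.Determinant" "HOL-Analysis.Function_Topology"
begin

text \<open>Every policy's vector of values at s_hat lies in the convex hull of the value vectors of
  the priority rules; mixing these convex combinations over the policies turns a solution of
  Program 1 into one of Program 2.  If the value vector of some policy were outside the hull, a
  separating functional c would give a single reward \<Sum>w. c w * r w for which that policy beats
  every priority rule.  This is impossible by the Gittins index theorem: for every reward some
  priority rule is optimal.

  The index theorem is proved by eliminating states.  The state i0 with the largest ratio of
  reward to stopping probability gets top priority; removing it, with its self-loops absorbed into
  the transitions and rewards of its arm, leaves a smaller bandit system whose optimal ranking,
  extended by putting i0 first, is optimal for the original system.  Optimality is certified by
  excessive functions V, i.e. V \<ge> g + Q V for every arm: each policy's value lies below such a V,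
  by a minimum principle that works because transient arms contain no closed stochastic class.\<close>

section \<open>Linear systems, reachability and convex combinations\<close>

lemma square_linear_system_solvable:
  fixes A :: "'b \<Rightarrow> 'b \<Rightarrow> real" and M :: "'b set"
  assumes fin: "finite M"
    and only_trivial: "\<And>v. (\<forall>s\<in>M. (\<Sum>t\<in>M. A s t * v t) = 0) \<Longrightarrow> (\<forall>s\<in>M. v s = 0)"
  shows "\<exists>v. \<forall>s\<in>M. (\<Sum>t\<in>M. A s t * v t) = b s"
proof -
  define n where "n = card M"
  obtain e where e: "bij_betw e {0..<n} M" using ex_bij_betw_nat_finite[OF fin] n_def by blast
  define ei where "ei = inv_into {0..<n} e"
  have ei: "ei t < n" "e (ei t) = t" if "t \<in> M" for t
    using e that unfolding ei_def bij_betw_def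
    by (metis atLeastLessThan_iff f_inv_into_f inv_into_into)+
  have eM: "e i \<in> M" and eie: "ei (e i) = i" if "i < n" for i
    using e that unfolding ei_def bij_betw_def by (auto simp: inv_into_f_f)
  have reindex: "(\<Sum>t\<in>M. f t) = (\<Sum>j<n. f (e j))" for f :: "'b \<Rightarrow> real"
    using sum.reindex_bij_betw[OF e, of f] by (simp add: atLeast0LessThan)
  define Am where "Am = mat n n (\<lambda>(i, j). A (e i) (e j))"
  have Am: "Am \<in> carrier_mat n n" unfolding Am_def by simp
  have Am_entry: "(Am *\<^sub>v x) $ (ei s) = (\<Sum>t\<in>M. A s t * x $ (ei t))" if "x \<in> carrier_vec n" "s \<in> M" for x s
    using that ei eie unfolding Am_def reindex
    by (simp add: mult_mat_vec_def scalar_prod_def atLeast0LessThan)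
  have "det Am \<noteq> 0"
  proof
    assume "det Am = 0"
    then obtain x where x: "x \<in> carrier_vec n" "x \<noteq> 0\<^sub>v n" "Am *\<^sub>v x = 0\<^sub>v n"
      using det_0_iff_vec_prod_zero[OF Am] by blast
    have "\<forall>s\<in>M. (\<Sum>t\<in>M. A s t * x $ (ei t)) = 0"
      using Am_entry[OF x(1)] x(3) ei by (metis index_zero_vec(1))
    then have "\<forall>s\<in>M. x $ (ei s) = 0" by (rule only_trivial)
    then have "x $ i = 0" if "i < n" for i using eM[OF that] eie[OF that] by metis
    then have "x = 0\<^sub>v n" using x(1) by (intro eq_vecI) auto
    with x(2) show False by simp
  qed
  then obtain B where B: "B \<in> carrier_mat n n" "Am * B = 1\<^sub>m n"
    using det_non_zero_imp_unit[OF Am] unfolding Units_def ring_mat_def by auto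
  define x where "x = B *\<^sub>v vec n (\<lambda>i. b (e i))"
  have x: "x \<in> carrier_vec n" unfolding x_def using B by simp
  have "Am *\<^sub>v x = vec n (\<lambda>i. b (e i))" unfolding x_def using B Am
    by (metis assoc_mult_mat_vec one_mult_mat_vec vec_carrier)
  then have "\<forall>s\<in>M. (\<Sum>t\<in>M. A s t * x $ (ei t)) = b s"
    using Am_entry[OF x] ei by simp
  then show ?thesis by (intro exI[of _ "\<lambda>t. x $ (ei t)"])
qed

lemma finite_closed_set_has_irreducible_subset:
  assumes "finite Z" "Z \<noteq> {}" "E `` Z \<subseteq> Z"
  obtains C where "C \<subseteq> Z" "C \<noteq> {}" "E `` C \<subseteq> C" "\<And>t u. t \<in> C \<Longrightarrow> u \<in> C \<Longrightarrow> (t, u) \<in> E\<^sup>*"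
proof -
  define closed where "closed C \<longleftrightarrow> C \<subseteq> Z \<and> C \<noteq> {} \<and> E `` C \<subseteq> C" for C
  have "closed Z" using assms unfolding closed_def by simp
  then obtain C where C: "closed C" and C_min: "\<And>C'. closed C' \<Longrightarrow> card C \<le> card C'"
    using ex_has_least_nat[of closed Z card] by blast
  have finC: "finite C" using C assms(1) finite_subset unfolding closed_def by blast
  have "(t, u) \<in> E\<^sup>*" if t: "t \<in> C" and u: "u \<in> C" for t u
  proof -
    have "E\<^sup>* `` {t} \<subseteq> E\<^sup>* `` C" using t by blast
    also have "\<dots> = C" using C by (simp add: Image_closed_trancl closed_def)
    finally have sub: "E\<^sup>* `` {t} \<subseteq> C" .
    have "closed (E\<^sup>* `` {t})"
      using sub C unfolding closed_def by (auto intro: rtrancl_into_rtrancl)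
    then have "card C \<le> card (E\<^sup>* `` {t})" by (rule C_min)
    then have "E\<^sup>* `` {t} = C" using sub finC by (meson card_seteq)
    then show ?thesis using u by blast
  qed
  then show thesis using C that unfolding closed_def by blast
qed

lemma exists_max_ratio:
  fixes f d :: "'b \<Rightarrow> real"
  assumes fin: "finite X" and ne: "X \<noteq> {}" and d_nonneg: "\<And>x. x \<in> X \<Longrightarrow> 0 \<le> d x"
  shows "\<exists>x\<in>X. \<forall>y\<in>X. f y * d x \<le> f x * d y"
proof (cases "\<exists>x\<in>X. d x = 0 \<and> 0 < f x")
  case True
  then obtain x where "x \<in> X" "d x = 0" "0 < f x" by blast
  then show ?thesis using d_nonneg by (intro bexI[of _ x]) auto
next
  case no_pos_infinite: False
  show ?thesis
  proof (cases "\<exists>x\<in>X. 0 < d x")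
    case True
    define Y where "Y = {x\<in>X. 0 < d x}"
    have fin_ratios: "finite ((\<lambda>x. f x / d x) ` Y)" and "(\<lambda>x. f x / d x) ` Y \<noteq> {}"
      using fin True unfolding Y_def by auto
    then have "Max ((\<lambda>x. f x / d x) ` Y) \<in> (\<lambda>x. f x / d x) ` Y" by (rule Max_in)
    then obtain x where x_Max: "Max ((\<lambda>x. f x / d x) ` Y) = f x / d x" and x: "x \<in> Y"
      by (rule imageE)
    have x_max: "f y / d y \<le> f x / d x" if "y \<in> Y" for y
      unfolding x_Max[symmetric] using fin_ratios that by simp
    have "f y * d x \<le> f x * d y" if y: "y \<in> X" for y
    proof (cases "0 < d y")
      case True
      then show ?thesis using x_max[of y] x y unfolding Y_def by (simp add: field_simps)
    next
      case False
      then have "d y = 0" "f y \<le> 0" using d_nonneg y no_pos_infinite by force+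
      then show ?thesis using x unfolding Y_def by (simp add: mult_nonpos_nonneg)
    qed
    then show ?thesis using x unfolding Y_def by blast
  next
    case False
    then have "\<forall>x\<in>X. d x = 0" using d_nonneg by force
    then show ?thesis using ne by auto
  qed
qed

lemma substochastic_average_at_negative_min:
  fixes p x :: "'b \<Rightarrow> real"
  assumes fin: "finite J" and p_nonneg: "\<And>j. j \<in> J \<Longrightarrow> 0 \<le> p j" and mass: "(\<Sum>j\<in>J. p j) \<le> 1"
    and above: "\<And>j. j \<in> J \<Longrightarrow> m \<le> x j" and m_neg: "m < 0"
    and average: "(\<Sum>j\<in>J. p j * x j) \<le> m"
  shows "(\<Sum>j\<in>J. p j) = 1" and "\<And>j. j \<in> J \<Longrightarrow> 0 < p j \<Longrightarrow> x j = m"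
proof -
  have split: "(\<Sum>j\<in>J. p j * x j) = (\<Sum>j\<in>J. p j) * m + (\<Sum>j\<in>J. p j * (x j - m))"
    by (simp add: algebra_simps sum_subtractf sum_distrib_left)
  have excess: "0 \<le> (\<Sum>j\<in>J. p j * (x j - m))"
    using p_nonneg above by (intro sum_nonneg) simp
  have "m \<le> (\<Sum>j\<in>J. p j) * m" using mass m_neg by (simp add: mult_le_cancel_right1)
  then have zero: "(\<Sum>j\<in>J. p j * (x j - m)) = 0" and full: "(\<Sum>j\<in>J. p j) * m = m"
    using split average excess by linarith+
  from full show "(\<Sum>j\<in>J. p j) = 1" using m_neg by simp
  fix j assume j: "j \<in> J" "0 < p j"
  have "\<forall>j\<in>J. p j * (x j - m) = 0"
    using zero sum_nonneg_eq_0_iff[OF fin, of "\<lambda>j. p j * (x j - m)"] p_nonneg above by simp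
  then have "p j * (x j - m) = 0" using j(1) by blast
  then show "x j = m" using j(2) by simp
qed

definition prob_simplex :: "'p set \<Rightarrow> ('p \<Rightarrow> real) set" where
  "prob_simplex P = {\<beta>. (\<forall>\<pi>\<in>P. 0 \<le> \<beta> \<pi>) \<and> (\<forall>\<pi>. \<pi> \<notin> P \<longrightarrow> \<beta> \<pi> = 0) \<and> sum \<beta> P = 1}"

lemma compact_prob_simplex:
  assumes fin: "finite P"
  shows "compact (prob_simplex P)"
proof -
  have "prob_simplex P = PiE UNIV (\<lambda>\<pi>. if \<pi> \<in> P then {0..1} else {0}) \<inter> {\<beta>. sum \<beta> P = 1}"
  proof (intro equalityI subsetI)
    fix \<beta> assume \<beta>: "\<beta> \<in> prob_simplex P"
    have "\<beta> \<pi> \<le> 1" if "\<pi> \<in> P" for \<pi>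
      using member_le_sum[OF that _ fin, of \<beta>] \<beta> unfolding prob_simplex_def by auto
    then show "\<beta> \<in> PiE UNIV (\<lambda>\<pi>. if \<pi> \<in> P then {0..1} else {0}) \<inter> {\<beta>. sum \<beta> P = 1}"
      using \<beta> unfolding prob_simplex_def by (auto simp: PiE_UNIV_domain)
  qed (auto simp: prob_simplex_def PiE_UNIV_domain Pi_iff split: if_splits)
  moreover have "compact (PiE UNIV (\<lambda>\<pi>. if \<pi> \<in> P then {0..1::real} else {0}))"
    using compactin_PiE[of "\<lambda>_. euclidean" UNIV "\<lambda>\<pi>. if \<pi> \<in> P then {0..1::real} else {0}"]
    by (simp add: euclidean_product_topology)
  moreover have "closed {\<beta>. sum \<beta> P = (1::real)}"
    by (intro closed_Collect_eq continuous_intros continuous_on_product_coordinates)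
  ultimately show ?thesis by auto
qed

lemma continuous_on_coordinate: "continuous_on S (\<lambda>\<beta>. \<beta> \<pi>)"
  by (rule continuous_on_subset[OF continuous_on_product_coordinates]) simp

lemma nonpos_if_linear_le_quadratic:
  fixes A D :: real
  assumes D: "0 \<le> D" and bound: "\<And>t. 0 < t \<Longrightarrow> t \<le> 1 \<Longrightarrow> 2 * t * A \<le> t\<^sup>2 * D"
  shows "A \<le> 0"
proof (rule ccontr)
  assume "\<not> A \<le> 0"
  define t where "t = min 1 (A / (D + 1))"
  have t: "0 < t" "t \<le> 1" using \<open>\<not> A \<le> 0\<close> D by (auto simp: t_def)
  have "2 * A \<le> t * D" using bound[OF t] t(1) by (simp add: power2_eq_square mult.assoc)
  also have "t * D \<le> A / (D + 1) * D" using D by (intro mult_right_mono) (auto simp: t_def)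
  also have "\<dots> < A" using \<open>\<not> A \<le> 0\<close> D by (simp add: field_simps)
  finally show False using \<open>\<not> A \<le> 0\<close> by simp
qed

lemma nearest_hull_point_optimal:
  fixes P :: "'p set" and \<beta> :: "'p \<Rightarrow> real" and v :: "'p \<Rightarrow> 'w \<Rightarrow> real"
  defines "y \<equiv> \<lambda>w. \<Sum>\<pi>\<in>P. \<beta> \<pi> * v \<pi> w"
  assumes fin: "finite P" and \<beta>: "\<beta> \<in> prob_simplex P" and \<pi>: "\<pi> \<in> P"
    and nearest: "\<And>\<gamma>. \<gamma> \<in> prob_simplex P \<Longrightarrow>
      (\<Sum>w\<in>Ws. (y w - z w)\<^sup>2) \<le> (\<Sum>w\<in>Ws. ((\<Sum>\<pi>\<in>P. \<gamma> \<pi> * v \<pi> w) - z w)\<^sup>2)"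
  shows "(\<Sum>w\<in>Ws. (z w - y w) * (v \<pi> w - y w)) \<le> 0"
proof (rule nonpos_if_linear_le_quadratic)
  let ?l = "\<lambda>w. z w - y w" and ?d = "\<lambda>w. v \<pi> w - y w"
  show "0 \<le> (\<Sum>w\<in>Ws. (?d w)\<^sup>2)" by (simp add: sum_nonneg)
  fix t :: real assume t: "0 < t" "t \<le> 1"
  define \<gamma> where "\<gamma> \<pi>' = (1 - t) * \<beta> \<pi>' + t * (if \<pi>' = \<pi> then 1 else 0)" for \<pi>'
  have "\<gamma> \<in> prob_simplex P"
    using \<beta> t \<pi> fin unfolding prob_simplex_def \<gamma>_def
    by (auto simp: sum.distrib sum_distrib_left[symmetric])
  have comb: "(\<Sum>\<pi>'\<in>P. \<gamma> \<pi>' * v \<pi>' w) = y w + t * ?d w" for w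
  proof -
    have "\<gamma> \<pi>' * v \<pi>' w = (1 - t) * (\<beta> \<pi>' * v \<pi>' w) + (if \<pi>' = \<pi> then t * v \<pi>' w else 0)" for \<pi>'
      unfolding \<gamma>_def by (simp add: algebra_simps)
    then have "(\<Sum>\<pi>'\<in>P. \<gamma> \<pi>' * v \<pi>' w) = (1 - t) * y w + t * v \<pi> w"
      unfolding y_def using \<pi> fin by (simp add: sum.distrib sum_distrib_left)
    then show ?thesis by (simp add: algebra_simps)
  qed
  have "(\<Sum>w\<in>Ws. ((\<Sum>\<pi>'\<in>P. \<gamma> \<pi>' * v \<pi>' w) - z w)\<^sup>2) = (\<Sum>w\<in>Ws. (t * ?d w - ?l w)\<^sup>2)"
    unfolding comb by (simp add: algebra_simps)
  moreover have "(\<Sum>w\<in>Ws. (?l w)\<^sup>2) = (\<Sum>w\<in>Ws. (y w - z w)\<^sup>2)"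
    by (simp add: power2_commute)
  ultimately have "(\<Sum>w\<in>Ws. (?l w)\<^sup>2) \<le> (\<Sum>w\<in>Ws. (t * ?d w - ?l w)\<^sup>2)"
    using nearest[OF \<open>\<gamma> \<in> prob_simplex P\<close>] by simp
  also have "\<dots> = (\<Sum>w\<in>Ws. (?l w)\<^sup>2) - 2 * t * (\<Sum>w\<in>Ws. ?l w * ?d w) + t\<^sup>2 * (\<Sum>w\<in>Ws. (?d w)\<^sup>2)"
    by (simp add: power2_eq_square algebra_simps sum.distrib sum_subtractf sum_distrib_left)
  finally show "2 * t * (\<Sum>w\<in>Ws. ?l w * ?d w) \<le> t\<^sup>2 * (\<Sum>w\<in>Ws. (?d w)\<^sup>2)" by simp
qed

lemma convex_combination_if_not_separated:
  fixes P :: "'p set" and v :: "'p \<Rightarrow> 'w \<Rightarrow> real" and z :: "'w \<Rightarrow> real"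
  assumes finP: "finite P" and neP: "P \<noteq> {}" and finW: "finite Ws"
    and not_separated: "\<And>c. \<exists>\<pi>\<in>P. (\<Sum>w\<in>Ws. c w * z w) \<le> (\<Sum>w\<in>Ws. c w * v \<pi> w)"
  shows "\<exists>\<beta>. (\<forall>\<pi>\<in>P. 0 \<le> \<beta> \<pi>) \<and> sum \<beta> P = 1 \<and> (\<forall>w\<in>Ws. (\<Sum>\<pi>\<in>P. \<beta> \<pi> * v \<pi> w) = z w)"
proof -
  obtain \<pi>0 where "\<pi>0 \<in> P" using neP by blast
  then have "(\<lambda>\<pi>. if \<pi> = \<pi>0 then 1 else 0) \<in> prob_simplex P"
    using finP by (simp add: prob_simplex_def)
  moreover have "continuous_on (prob_simplex P) (\<lambda>\<gamma>. \<Sum>w\<in>Ws. ((\<Sum>\<pi>\<in>P. \<gamma> \<pi> * v \<pi> w) - z w)\<^sup>2)"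
    by (intro continuous_intros continuous_on_coordinate)
  ultimately obtain \<beta> where \<beta>: "\<beta> \<in> prob_simplex P" and nearest: "\<And>\<gamma>. \<gamma> \<in> prob_simplex P \<Longrightarrow>
      (\<Sum>w\<in>Ws. ((\<Sum>\<pi>\<in>P. \<beta> \<pi> * v \<pi> w) - z w)\<^sup>2) \<le> (\<Sum>w\<in>Ws. ((\<Sum>\<pi>\<in>P. \<gamma> \<pi> * v \<pi> w) - z w)\<^sup>2)"
    using continuous_attains_inf[OF compact_prob_simplex[OF finP]] by blast
  define y where "y w = (\<Sum>\<pi>\<in>P. \<beta> \<pi> * v \<pi> w)" for w
  define l where "l w = z w - y w" for w
  obtain \<pi> where \<pi>: "\<pi> \<in> P" and sep: "(\<Sum>w\<in>Ws. l w * z w) \<le> (\<Sum>w\<in>Ws. l w * v \<pi> w)"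
    using not_separated by blast
  have "(\<Sum>w\<in>Ws. (l w)\<^sup>2) = (\<Sum>w\<in>Ws. l w * z w - l w * y w)"
    unfolding l_def by (simp add: power2_eq_square algebra_simps)
  also have "\<dots> \<le> (\<Sum>w\<in>Ws. l w * (v \<pi> w - y w))"
    using sep by (simp add: algebra_simps sum_subtractf)
  also have "\<dots> \<le> 0"
    unfolding l_def y_def by (rule nearest_hull_point_optimal[OF finP \<beta> \<pi> nearest])
  finally have "\<forall>w\<in>Ws. (l w)\<^sup>2 = 0"
    using sum_nonneg_eq_0_iff[OF finW, of "\<lambda>w. (l w)\<^sup>2"] by (simp add: sum_nonneg order_antisym)
  then show ?thesis using \<beta> unfolding prob_simplex_def l_def y_def by auto
qed

lemma convex_combination_of_convex_combinations:
  fixes \<alpha> :: "'d \<Rightarrow> real" and \<beta> :: "'d \<Rightarrow> 'p \<Rightarrow> real"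
  assumes \<alpha>_nonneg: "\<And>\<delta>. \<delta> \<in> D \<Longrightarrow> 0 \<le> \<alpha> \<delta>" and \<alpha>_sum: "sum \<alpha> D = 1"
    and \<beta>: "\<And>\<delta>. \<delta> \<in> D \<Longrightarrow> (\<forall>\<pi>\<in>P. 0 \<le> \<beta> \<delta> \<pi>) \<and> sum (\<beta> \<delta>) P = 1
      \<and> (\<forall>w\<in>Ws. (\<Sum>\<pi>\<in>P. \<beta> \<delta> \<pi> * v \<pi> w) = u \<delta> w)"
  shows "\<exists>\<gamma>. (\<forall>\<pi>\<in>P. 0 \<le> \<gamma> \<pi>) \<and> sum \<gamma> P = 1
    \<and> (\<forall>w\<in>Ws. (\<Sum>\<pi>\<in>P. \<gamma> \<pi> * v \<pi> w) = (\<Sum>\<delta>\<in>D. \<alpha> \<delta> * u \<delta> w))"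
proof -
  define \<gamma> where "\<gamma> \<pi> = (\<Sum>\<delta>\<in>D. \<alpha> \<delta> * \<beta> \<delta> \<pi>)" for \<pi>
  have \<gamma>_nonneg: "0 \<le> \<gamma> \<pi>" if "\<pi> \<in> P" for \<pi>
  proof -
    have "0 \<le> \<alpha> \<delta> * \<beta> \<delta> \<pi>" if "\<delta> \<in> D" for \<delta>
      using \<alpha>_nonneg[OF that] \<beta>[OF that] \<open>\<pi> \<in> P\<close> by simp
    then show ?thesis unfolding \<gamma>_def by (rule sum_nonneg)
  qed
  have "sum \<gamma> P = (\<Sum>\<delta>\<in>D. \<alpha> \<delta> * sum (\<beta> \<delta>) P)"
    unfolding \<gamma>_def by (subst sum.swap) (simp add: sum_distrib_left)
  then have "sum \<gamma> P = 1" using \<beta> \<alpha>_sum by simp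
  moreover have "(\<Sum>\<pi>\<in>P. \<gamma> \<pi> * v \<pi> w) = (\<Sum>\<delta>\<in>D. \<alpha> \<delta> * u \<delta> w)" if w: "w \<in> Ws" for w
  proof -
    have "(\<Sum>\<pi>\<in>P. \<gamma> \<pi> * v \<pi> w) = (\<Sum>\<pi>\<in>P. \<Sum>\<delta>\<in>D. \<alpha> \<delta> * (\<beta> \<delta> \<pi> * v \<pi> w))"
      unfolding \<gamma>_def by (simp add: sum_distrib_right mult.assoc)
    also have "\<dots> = (\<Sum>\<delta>\<in>D. \<alpha> \<delta> * (\<Sum>\<pi>\<in>P. \<beta> \<delta> \<pi> * v \<pi> w))"
      by (subst sum.swap) (simp add: sum_distrib_left)
    also have "\<dots> = (\<Sum>\<delta>\<in>D. \<alpha> \<delta> * u \<delta> w)" using \<beta> w by simp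
    finally show ?thesis .
  qed
  ultimately show ?thesis using \<gamma>_nonneg by blast
qed

section \<open>Policies and their values\<close>

lemma multistates_upd:
  "s \<in> multistates K N \<Longrightarrow> k \<in> {1..K} \<Longrightarrow> j \<in> N k \<Longrightarrow> s(k := j) \<in> multistates K N"
  unfolding multistates_def by (auto simp: PiE_iff extensional_def)

lemma multistates_component: "s \<in> multistates K N \<Longrightarrow> k \<in> {1..K} \<Longrightarrow> s k \<in> N k"
  unfolding multistates_def by auto

lemma finite_multistates: "(\<And>k. k \<in> {1..K} \<Longrightarrow> finite (N k)) \<Longrightarrow> finite (multistates K N)"
  unfolding multistates_def by (intro finite_PiE) auto

lemma all_statesI: "k \<in> {1..K} \<Longrightarrow> i \<in> N k \<Longrightarrow> i \<in> all_states K N"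
  unfolding all_states_def by blast

lemma Qmat_sum:
  assumes s: "s \<in> multistates K N" and k: "\<delta> s \<in> {1..K}"
    and fin: "\<And>k. k \<in> {1..K} \<Longrightarrow> finite (N k)"
  shows "(\<Sum>t\<in>multistates K N. Qmat N q \<delta> s t * f t)
       = (\<Sum>j\<in>N (\<delta> s). q (s (\<delta> s)) j * f (s(\<delta> s := j)))"
proof -
  let ?k = "\<delta> s"
  let ?upd = "\<lambda>j. s(?k := j)"
  have inj: "inj_on ?upd (N ?k)" by (rule inj_onI) (metis fun_upd_same)
  have Q: "Qmat N q \<delta> s t = (if t \<in> ?upd ` N ?k then q (s ?k) (t ?k) else 0)" for t
    unfolding Qmat_def by auto
  have "(\<Sum>t\<in>multistates K N. Qmat N q \<delta> s t * f t) = (\<Sum>t\<in>?upd ` N ?k. Qmat N q \<delta> s t * f t)"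
    using multistates_upd[OF s k] finite_multistates[OF fin]
    by (intro sum.mono_neutral_right) (auto simp: Q)
  also have "\<dots> = (\<Sum>j\<in>N ?k. q (s ?k) j * f (s(?k := j)))"
    by (simp add: sum.reindex[OF inj] Q)
  finally show ?thesis .
qed

definition closed_class :: "'a set \<Rightarrow> ('a \<Rightarrow> 'a \<Rightarrow> real) \<Rightarrow> 'a set \<Rightarrow> bool" where
  "closed_class B q A \<longleftrightarrow> A \<subseteq> B \<and> A \<noteq> {} \<and>
     (\<forall>x\<in>A. (\<Sum>j\<in>B. q x j) = 1 \<and> (\<forall>j\<in>B. 0 < q x j \<longrightarrow> j \<in> A))"

lemma transient_on_no_closed_class:
  assumes fin: "finite B" and tr: "transient_on B q"
    and nonneg: "\<And>i j. i \<in> B \<Longrightarrow> j \<in> B \<Longrightarrow> 0 \<le> q i j"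
  shows "\<not> closed_class B q A"
proof
  assume cl: "closed_class B q A"
  then have A: "A \<subseteq> B" "A \<noteq> {}" unfolding closed_class_def by auto
  have finA: "finite A" using A(1) fin finite_subset by blast
  have vanish: "q i l = 0" if "i \<in> A" "l \<in> B" "l \<notin> A" for i l
    using cl that nonneg[of i l] A(1) unfolding closed_class_def by force
  define f where "f n i = (\<Sum>j\<in>A. mat_pow_on B q n i j)" for n i
  \<comment> \<open>Mass started in a closed class never leaves it.\<close>
  have f_one: "f n i = 1" if "i \<in> A" for n i
    using that
  proof (induction n arbitrary: i)
    case 0
    then show ?case using finA unfolding f_def by simp
  next
    case (Suc n)
    have "f (Suc n) i = (\<Sum>j\<in>A. \<Sum>l\<in>B. q i l * mat_pow_on B q n l j)"
      unfolding f_def by simp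
    also have "\<dots> = (\<Sum>l\<in>B. q i l * f n l)"
      unfolding f_def by (subst sum.swap) (simp add: sum_distrib_left)
    also have "\<dots> = (\<Sum>l\<in>B. q i l)"
      using Suc vanish by (intro sum.cong) auto
    also have "\<dots> = 1" using cl Suc.prems unfolding closed_class_def by blast
    finally show ?case .
  qed
  obtain i where i: "i \<in> A" using A by blast
  have "(\<lambda>n. f n i) \<longlonglongrightarrow> (\<Sum>j\<in>A. 0)"
    unfolding f_def using tr i A unfolding transient_on_def by (intro tendsto_sum) blast
  moreover have "(\<lambda>n. f n i) \<longlonglongrightarrow> 1" using f_one[OF i] by simp
  ultimately show False using LIMSEQ_unique by fastforce
qed

definition play_value :: "(nat \<Rightarrow> 'a set) \<Rightarrow> ('a \<Rightarrow> 'a \<Rightarrow> real) \<Rightarrow> ('a \<Rightarrow> real)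
    \<Rightarrow> ((nat \<Rightarrow> 'a) \<Rightarrow> real) \<Rightarrow> (nat \<Rightarrow> 'a) \<Rightarrow> nat \<Rightarrow> real" where
  "play_value N q g V s k = g (s k) + (\<Sum>j\<in>N k. q (s k) j * V (s(k := j)))"

definition policy_value :: "nat \<Rightarrow> (nat \<Rightarrow> 'a set) \<Rightarrow> ('a \<Rightarrow> 'a \<Rightarrow> real) \<Rightarrow> ('a \<Rightarrow> real)
    \<Rightarrow> ((nat \<Rightarrow> 'a) \<Rightarrow> nat) \<Rightarrow> ((nat \<Rightarrow> 'a) \<Rightarrow> real) \<Rightarrow> bool" where
  "policy_value K N q g \<delta> V \<longleftrightarrow> (\<forall>s\<in>multistates K N. V s = play_value N q g V s (\<delta> s))"

definition excessive :: "nat \<Rightarrow> (nat \<Rightarrow> 'a set) \<Rightarrow> ('a \<Rightarrow> 'a \<Rightarrow> real) \<Rightarrow> ('a \<Rightarrow> real)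
    \<Rightarrow> ((nat \<Rightarrow> 'a) \<Rightarrow> real) \<Rightarrow> bool" where
  "excessive K N q g V \<longleftrightarrow> (\<forall>s\<in>multistates K N. \<forall>k\<in>{1..K}. play_value N q g V s k \<le> V s)"

lemma play_value_diff:
  "play_value N q g V s k - play_value N q g U s k = play_value N q (\<lambda>_. 0) (\<lambda>t. V t - U t) s k"
  unfolding play_value_def by (simp add: algebra_simps sum_subtractf)

lemma play_value_cong:
  "(\<And>j. j \<in> N k \<Longrightarrow> V (s(k := j)) = U (s(k := j))) \<Longrightarrow> play_value N q g V s k = play_value N q g U s k"
  unfolding play_value_def by simp

lemma policy_value_lincomb:
  assumes "\<And>w. w \<in> Ws \<Longrightarrow> policy_value K N q (g w) \<delta> (V w)"
  shows "policy_value K N q (\<lambda>i. \<Sum>w\<in>Ws. c w * g w i) \<delta> (\<lambda>s. \<Sum>w\<in>Ws. c w * V w s)"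
  unfolding policy_value_def
proof
  fix s assume s: "s \<in> multistates K N"
  let ?k = "\<delta> s"
  have "(\<Sum>w\<in>Ws. c w * V w s) = (\<Sum>w\<in>Ws. c w * play_value N q (g w) (V w) s ?k)"
    using assms s unfolding policy_value_def by (intro sum.cong) auto
  also have "\<dots> = (\<Sum>w\<in>Ws. c w * g w (s ?k))
      + (\<Sum>w\<in>Ws. \<Sum>j\<in>N ?k. c w * (q (s ?k) j * V w (s(?k := j))))"
    unfolding play_value_def by (simp add: distrib_left sum.distrib sum_distrib_left)
  also have "(\<Sum>w\<in>Ws. \<Sum>j\<in>N ?k. c w * (q (s ?k) j * V w (s(?k := j))))
      = (\<Sum>j\<in>N ?k. \<Sum>w\<in>Ws. c w * (q (s ?k) j * V w (s(?k := j))))"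
    by (rule sum.swap)
  finally show "(\<Sum>w\<in>Ws. c w * V w s)
      = play_value N q (\<lambda>i. \<Sum>w\<in>Ws. c w * g w i) (\<lambda>s. \<Sum>w\<in>Ws. c w * V w s) s ?k"
    unfolding play_value_def by (simp add: sum_distrib_left mult.left_commute)
qed

definition policy_graph :: "(nat \<Rightarrow> 'a set) \<Rightarrow> ('a \<Rightarrow> 'a \<Rightarrow> real) \<Rightarrow> ((nat \<Rightarrow> 'a) \<Rightarrow> nat)
    \<Rightarrow> ((nat \<Rightarrow> 'a) \<times> (nat \<Rightarrow> 'a)) set" where
  "policy_graph N q \<delta> = {(s, t). \<exists>j\<in>N (\<delta> s). 0 < q (s (\<delta> s)) j \<and> t = s(\<delta> s := j)}"

lemma closed_class_of_irreducible_set: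
  assumes \<delta>: "\<delta> \<in> multistates K N \<rightarrow> {1..K}" and C: "C \<subseteq> multistates K N" "s0 \<in> C"
    and C_closed: "policy_graph N q \<delta> `` C \<subseteq> C"
    and irreducible: "\<And>t u. t \<in> C \<Longrightarrow> u \<in> C \<Longrightarrow> (t, u) \<in> (policy_graph N q \<delta>)\<^sup>*"
    and stochastic: "\<And>s. s \<in> C \<Longrightarrow> (\<Sum>j\<in>N (\<delta> s). q (s (\<delta> s)) j) = 1"
  shows "closed_class (N (\<delta> s0)) q ((\<lambda>u. u (\<delta> s0)) ` {u\<in>C. \<delta> u = \<delta> s0})"
proof -
  define k where "k = \<delta> s0"
  define A where "A = (\<lambda>u. u k) ` {u\<in>C. \<delta> u = k}"
  have k: "k \<in> {1..K}" using \<delta> C unfolding k_def by blast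
  have A_sub: "A \<subseteq> N k" unfolding A_def using C(1) multistates_component k by blast
  have A_ne: "A \<noteq> {}" using C(2) unfolding A_def k_def by blast
  \<comment> \<open>Only moves of arm k change the k-th component, so a path in C that changes it
    passes through a multistate of C where arm k is played.\<close>
  have visit: "\<exists>t\<in>C. \<delta> t = k \<and> t k = b k"
    if "(b, u) \<in> (policy_graph N q \<delta>)\<^sup>*" "b \<in> C" "b k \<noteq> u k" for b u
    using that
  proof (induction rule: converse_rtrancl_induct)
    case (step a b')
    then obtain j where b': "b' = a(\<delta> a := j)" unfolding policy_graph_def by blast
    have "b' \<in> C" using step.hyps(1) step.prems(1) C_closed by blast
    show ?case
    proof (cases "\<delta> a = k")
      case False
      then have "b' k = a k" using b' by simp
      then show ?thesis using step.IH \<open>b' \<in> C\<close> step.prems(2) by simp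
    qed (use step.prems(1) in blast)
  qed simp
  have "j \<in> A" if u: "u \<in> C" "\<delta> u = k" and j: "j \<in> N k" "0 < q (u k) j" for u j
  proof (cases "j = u k")
    case True
    then show ?thesis unfolding A_def using u by (intro image_eqI[of _ _ u]) auto
  next
    case False
    have "(u, u(k := j)) \<in> policy_graph N q \<delta>"
      unfolding policy_graph_def using u(2) j by (auto intro!: bexI[of _ j])
    then have b: "u(k := j) \<in> C" using C_closed u(1) by blast
    obtain t where "t \<in> C" "\<delta> t = k" "t k = j"
      using visit[OF irreducible[OF b u(1)] b] False by auto
    then show ?thesis unfolding A_def by (intro image_eqI[of _ _ t]) auto
  qed
  moreover have "(\<Sum>j\<in>N k. q (u k) j) = 1" if "u \<in> C" "\<delta> u = k" for u
    using stochastic that by auto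
  ultimately have "closed_class (N k) q A"
    unfolding closed_class_def using A_sub A_ne unfolding A_def by blast
  then show ?thesis unfolding A_def k_def .
qed

locale bandit_system =
  fixes K :: nat and N :: "nat \<Rightarrow> 'a set" and q :: "'a \<Rightarrow> 'a \<Rightarrow> real"
  assumes K_pos: "1 \<le> K"
    and finite_arm: "k \<in> {1..K} \<Longrightarrow> finite (N k)"
    and arm_nonempty: "k \<in> {1..K} \<Longrightarrow> N k \<noteq> {}"
    and arms_disjoint: "k \<in> {1..K} \<Longrightarrow> k' \<in> {1..K} \<Longrightarrow> k \<noteq> k' \<Longrightarrow> N k \<inter> N k' = {}"
    and q_nonneg: "k \<in> {1..K} \<Longrightarrow> i \<in> N k \<Longrightarrow> j \<in> N k \<Longrightarrow> 0 \<le> q i j"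
    and q_substochastic: "k \<in> {1..K} \<Longrightarrow> i \<in> N k \<Longrightarrow> (\<Sum>j\<in>N k. q i j) \<le> 1"
    and no_closed_class: "k \<in> {1..K} \<Longrightarrow> \<not> closed_class (N k) q A"
begin

lemma finite_state_space: "finite (multistates K N)"
  using finite_multistates finite_arm by blast

lemma finite_all_states: "finite (all_states K N)"
  unfolding all_states_def using finite_arm by blast

lemma notin_other_arm: "k \<in> {1..K} \<Longrightarrow> k' \<in> {1..K} \<Longrightarrow> k \<noteq> k' \<Longrightarrow> i \<in> N k \<Longrightarrow> i \<notin> N k'"
  using arms_disjoint by blast

lemma no_closed_multistate_set:
  assumes \<delta>: "\<delta> \<in> multistates K N \<rightarrow> {1..K}" and Z: "Z \<subseteq> multistates K N" "Z \<noteq> {}"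
    and closed: "\<And>s j. s \<in> Z \<Longrightarrow> j \<in> N (\<delta> s) \<Longrightarrow> 0 < q (s (\<delta> s)) j \<Longrightarrow> s(\<delta> s := j) \<in> Z"
    and stochastic: "\<And>s. s \<in> Z \<Longrightarrow> (\<Sum>j\<in>N (\<delta> s). q (s (\<delta> s)) j) = 1"
  shows False
proof -
  have finZ: "finite Z" using Z(1) finite_state_space finite_subset by blast
  have "policy_graph N q \<delta> `` Z \<subseteq> Z" using closed unfolding policy_graph_def by auto
  then obtain C where CZ: "C \<subseteq> Z" and "C \<noteq> {}" and C_closed: "policy_graph N q \<delta> `` C \<subseteq> C"
    and irreducible: "\<And>t u. t \<in> C \<Longrightarrow> u \<in> C \<Longrightarrow> (t, u) \<in> (policy_graph N q \<delta>)\<^sup>*"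
    using finite_closed_set_has_irreducible_subset[OF finZ Z(2)] by metis
  then obtain s0 where s0: "s0 \<in> C" by blast
  have "closed_class (N (\<delta> s0)) q ((\<lambda>u. u (\<delta> s0)) ` {u\<in>C. \<delta> u = \<delta> s0})"
    using CZ Z(1) stochastic
    by (intro closed_class_of_irreducible_set[OF \<delta> _ s0 C_closed irreducible]) auto
  moreover have "\<delta> s0 \<in> {1..K}" using \<delta> Z(1) CZ s0 by blast
  ultimately show False using no_closed_class by blast
qed

lemma nonneg_if_superharmonic:
  assumes \<delta>: "\<delta> \<in> multistates K N \<rightarrow> {1..K}"
    and super: "\<And>s. s \<in> multistates K N \<Longrightarrow> play_value N q (\<lambda>_. 0) D s (\<delta> s) \<le> D s"
    and s: "s \<in> multistates K N"
  shows "0 \<le> D s"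
proof (rule ccontr)
  let ?M = "multistates K N"
  assume "\<not> 0 \<le> D s"
  define m where "m = Min (D ` ?M)"
  have m_le: "m \<le> D t" if "t \<in> ?M" for t unfolding m_def using finite_state_space that by simp
  have m_neg: "m < 0" using m_le[OF s] \<open>\<not> 0 \<le> D s\<close> by simp
  define Z where "Z = {t\<in>?M. D t = m}"
  have "m \<in> D ` ?M" unfolding m_def using finite_state_space s by (intro Min_in) auto
  then have "Z \<noteq> {}" unfolding Z_def by auto
  \<comment> \<open>Minimum principle: the minimizers of D form a closed set on which no mass is lost.\<close>
  have min_Z: "(\<Sum>j\<in>N (\<delta> t). q (t (\<delta> t)) j) = 1 \<and>
      (\<forall>j\<in>N (\<delta> t). 0 < q (t (\<delta> t)) j \<longrightarrow> t(\<delta> t := j) \<in> Z)" if t: "t \<in> Z" for t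
  proof -
    have tM: "t \<in> ?M" and Dt: "D t = m" using t unfolding Z_def by auto
    have k: "\<delta> t \<in> {1..K}" using \<delta> tM by (rule funcset_mem)
    have tk: "t (\<delta> t) \<in> N (\<delta> t)" by (rule multistates_component[OF tM k])
    have upd: "t(\<delta> t := j) \<in> ?M" if "j \<in> N (\<delta> t)" for j using multistates_upd[OF tM k that] .
    have above: "m \<le> D (t(\<delta> t := j))" if "j \<in> N (\<delta> t)" for j using m_le[OF upd[OF that]] .
    have "(\<Sum>j\<in>N (\<delta> t). q (t (\<delta> t)) j * D (t(\<delta> t := j))) \<le> m"
      using super[OF tM] Dt unfolding play_value_def by simp
    note average = substochastic_average_at_negative_min[OF finite_arm[OF k] q_nonneg[OF k tk]
        q_substochastic[OF k tk] above m_neg this]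
    show ?thesis using average upd unfolding Z_def by blast
  qed
  have "Z \<subseteq> ?M" unfolding Z_def by blast
  then show False
    by (rule no_closed_multistate_set[OF \<delta> _ \<open>Z \<noteq> {}\<close>]) (use min_Z in blast)+
qed

lemma policy_value_unique:
  assumes \<delta>: "\<delta> \<in> multistates K N \<rightarrow> {1..K}"
    and V: "policy_value K N q g \<delta> V" and U: "policy_value K N q g \<delta> U"
    and s: "s \<in> multistates K N"
  shows "V s = U s"
proof -
  have "play_value N q (\<lambda>_. 0) (\<lambda>t. V t - U t) t (\<delta> t) = V t - U t"
    and "play_value N q (\<lambda>_. 0) (\<lambda>t. U t - V t) t (\<delta> t) = U t - V t"
    if "t \<in> multistates K N" for t
    using play_value_diff[of N q g V t "\<delta> t" U] play_value_diff[of N q g U t "\<delta> t" V] V U that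
    unfolding policy_value_def by auto
  then have "0 \<le> V s - U s" "0 \<le> U s - V s"
    using nonneg_if_superharmonic[OF \<delta> _ s, of "\<lambda>t. V t - U t"]
      nonneg_if_superharmonic[OF \<delta> _ s, of "\<lambda>t. U t - V t"] by simp_all
  then show ?thesis by simp
qed

lemma policy_value_le_excessive:
  assumes \<delta>: "\<delta> \<in> multistates K N \<rightarrow> {1..K}"
    and U: "policy_value K N q g \<delta> U" and V: "excessive K N q g V"
    and s: "s \<in> multistates K N"
  shows "U s \<le> V s"
proof -
  have "play_value N q (\<lambda>_. 0) (\<lambda>t. V t - U t) t (\<delta> t) \<le> V t - U t" if t: "t \<in> multistates K N" for t
    using play_value_diff[of N q g V t "\<delta> t" U] V U t \<delta> unfolding policy_value_def excessive_def by force
  from nonneg_if_superharmonic[OF \<delta> this s] show ?thesis by simp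
qed

lemma Qmat_equation_iff_play_value:
  assumes "s \<in> multistates K N" "\<delta> s \<in> {1..K}"
  shows "V s - (\<Sum>t\<in>multistates K N. Qmat N q \<delta> s t * V t) = g (s (\<delta> s))
    \<longleftrightarrow> V s = play_value N q g V s (\<delta> s)"
  using Qmat_sum[where \<delta>=\<delta> and s=s, OF assms finite_arm] unfolding play_value_def by auto

lemma exists_policy_value:
  assumes \<delta>: "\<delta> \<in> multistates K N \<rightarrow> {1..K}"
  shows "\<exists>V. policy_value K N q g \<delta> V"
proof -
  let ?M = "multistates K N"
  have \<delta>s: "\<delta> s \<in> {1..K}" if "s \<in> ?M" for s
    using \<delta> that by (rule funcset_mem)
  define A where "A s t = (if s = t then 1 else 0) - Qmat N q \<delta> s t" for s t
  have A_sum: "(\<Sum>t\<in>?M. A s t * v t) = v s - (\<Sum>t\<in>?M. Qmat N q \<delta> s t * v t)"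
    if "s \<in> ?M" for s v
  proof -
    have "(\<Sum>t\<in>?M. A s t * v t)
        = (\<Sum>t\<in>?M. if s = t then v t else 0) - (\<Sum>t\<in>?M. Qmat N q \<delta> s t * v t)"
      unfolding A_def
      by (simp add: left_diff_distrib sum_subtractf if_distrib[where f="\<lambda>x. x * v _"] cong: if_cong)
    then show ?thesis using finite_state_space that by simp
  qed
  have solves_iff: "(\<Sum>t\<in>?M. A s t * v t) = h (s (\<delta> s)) \<longleftrightarrow> v s = play_value N q h v s (\<delta> s)"
    if "s \<in> ?M" for s v h
    using A_sum[OF that] Qmat_equation_iff_play_value[where \<delta>=\<delta> and s=s, OF that \<delta>s[OF that]]
    by simp
  have "\<exists>v. \<forall>s\<in>?M. (\<Sum>t\<in>?M. A s t * v t) = g (s (\<delta> s))"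
  proof (rule square_linear_system_solvable[OF finite_state_space])
    fix v assume "\<forall>s\<in>?M. (\<Sum>t\<in>?M. A s t * v t) = 0"
    then have "policy_value K N q (\<lambda>_. 0) \<delta> v"
      unfolding policy_value_def using solves_iff[where h="\<lambda>_. 0"] by simp
    moreover have "policy_value K N q (\<lambda>_. 0) \<delta> (\<lambda>_. 0)"
      unfolding policy_value_def play_value_def by simp
    ultimately show "\<forall>s\<in>?M. v s = 0" using policy_value_unique[OF \<delta>] by blast
  qed
  then show ?thesis unfolding policy_value_def using solves_iff by blast
qed

lemma policy_value_restrict:
  assumes \<delta>: "\<delta> \<in> multistates K N \<rightarrow> {1..K}" and V: "policy_value K N q g \<delta> V"
  shows "policy_value K N q g \<delta> (restrict V (multistates K N))"
  unfolding policy_value_def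
proof
  fix s assume s: "s \<in> multistates K N"
  have "play_value N q g V s (\<delta> s) = play_value N q g (restrict V (multistates K N)) s (\<delta> s)"
    using multistates_upd[OF s funcset_mem[OF \<delta> s]] by (intro play_value_cong) simp
  then show "restrict V (multistates K N) s = play_value N q g (restrict V (multistates K N)) s (\<delta> s)"
    using V s unfolding policy_value_def by simp
qed

lemma Vval_policy_value:
  assumes \<delta>: "\<delta> \<in> multistates K N \<rightarrow> {1..K}"
  shows "policy_value K N q (r w) \<delta> (Vval K N q r w \<delta>)"
proof -
  let ?M = "multistates K N"
  let ?P = "\<lambda>V. V \<in> extensional ?M \<and> policy_value K N q (r w) \<delta> V"
  have Vval_eq: "Vval K N q r w \<delta> = (THE V. ?P V)"
    unfolding Vval_def Rvec_def policy_value_def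
    using Qmat_equation_iff_play_value[where \<delta>=\<delta>] funcset_mem[OF \<delta>]
    by (intro arg_cong[where f=The] ext) auto
  obtain V where "policy_value K N q (r w) \<delta> V" using exists_policy_value[OF \<delta>] by blast
  then have V: "?P (restrict V ?M)" using policy_value_restrict[OF \<delta>] by simp
  have "U = restrict V ?M" if U: "?P U" for U
  proof (rule extensionalityI[of U ?M])
    show "U s = restrict V ?M s" if "s \<in> ?M" for s
      using policy_value_unique[OF \<delta> _ _ that] U V by blast
  qed (use U in auto)
  then have "?P (THE V. ?P V)" by (rule theI[of ?P, OF V])
  with Vval_eq show ?thesis by simp
qed

end

lemma bandit_system_if_transient:
  assumes "1 \<le> K" and fin: "\<forall>k\<in>{1..K}. finite (N k) \<and> N k \<noteq> {}"
    and disj: "\<forall>k\<in>{1..K}. \<forall>k'\<in>{1..K}. k \<noteq> k' \<longrightarrow> N k \<inter> N k' = {}"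
    and nonneg: "\<forall>k\<in>{1..K}. \<forall>i\<in>N k. \<forall>j\<in>N k. 0 \<le> q i j"
    and transient: "\<forall>k\<in>{1..K}. transient_on (N k) q"
    and substoch: "\<forall>k\<in>{1..K}. substochastic_on (N k) q"
  shows "bandit_system K N q"
proof
  show "1 \<le> K" by fact
  show "finite (N k)" "N k \<noteq> {}" if "k \<in> {1..K}" for k using fin that by auto
  show "N k \<inter> N k' = {}" if "k \<in> {1..K}" "k' \<in> {1..K}" "k \<noteq> k'" for k k'
    using disj that by blast
  show "0 \<le> q i j" if "k \<in> {1..K}" "i \<in> N k" "j \<in> N k" for k i j using nonneg that by blast
  show "(\<Sum>j\<in>N k. q i j) \<le> 1" if "k \<in> {1..K}" "i \<in> N k" for k i
    using substoch that unfolding substochastic_on_def by blast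
  show "\<not> closed_class (N k) q A" if "k \<in> {1..K}" for k A
    by (rule transient_on_no_closed_class) (use fin transient nonneg that in auto)
qed

section \<open>The Gittins index theorem\<close>

definition priority_arm :: "nat \<Rightarrow> ('a \<Rightarrow> nat) \<Rightarrow> (nat \<Rightarrow> 'a) \<Rightarrow> nat" where
  "priority_arm K \<rho> s = (THE k. k \<in> {1..K} \<and> (\<forall>k'\<in>{1..K}. k' \<noteq> k \<longrightarrow> \<rho> (s k) < \<rho> (s k')))"

lemma priority_arm_eqI:
  assumes "k \<in> {1..K}" and "\<And>k'. k' \<in> {1..K} \<Longrightarrow> k' \<noteq> k \<Longrightarrow> \<rho> (s k) < \<rho> (s k')"
  shows "priority_arm K \<rho> s = k"
  unfolding priority_arm_def
proof (rule the_equality)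
  fix k2 assume k2: "k2 \<in> {1..K} \<and> (\<forall>k'\<in>{1..K}. k' \<noteq> k2 \<longrightarrow> \<rho> (s k2) < \<rho> (s k'))"
  show "k2 = k"
  proof (rule ccontr)
    assume "k2 \<noteq> k"
    then have "\<rho> (s k2) < \<rho> (s k)" "\<rho> (s k) < \<rho> (s k2)" using k2 assms by auto
    then show False by simp
  qed
qed (use assms in blast)

context bandit_system
begin

lemma priority_arm:
  assumes inj: "inj_on \<rho> (all_states K N)" and s: "s \<in> multistates K N"
  shows "priority_arm K \<rho> s \<in> {1..K}"
    and "\<And>k'. k' \<in> {1..K} \<Longrightarrow> k' \<noteq> priority_arm K \<rho> s \<Longrightarrow> \<rho> (s (priority_arm K \<rho> s)) < \<rho> (s k')"
proof -
  have "finite ((\<lambda>k. \<rho> (s k)) ` {1..K})" "(\<lambda>k. \<rho> (s k)) ` {1..K} \<noteq> {}" using K_pos by auto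
  then have "Min ((\<lambda>k. \<rho> (s k)) ` {1..K}) \<in> (\<lambda>k. \<rho> (s k)) ` {1..K}" by (rule Min_in)
  then obtain k where k: "Min ((\<lambda>k. \<rho> (s k)) ` {1..K}) = \<rho> (s k)" "k \<in> {1..K}"
    by (rule imageE)
  have less: "\<rho> (s k) < \<rho> (s k')" if k': "k' \<in> {1..K}" "k' \<noteq> k" for k'
  proof -
    have "\<rho> (s k) \<le> \<rho> (s k')" unfolding k(1)[symmetric] using k' by simp
    have comp: "s k \<in> N k" "s k' \<in> N k'"
      using multistates_component[OF s] k(2) k'(1) by auto
    then have "s k \<noteq> s k'" using notin_other_arm[OF k(2) k'(1)] k'(2) by metis
    moreover have "s k \<in> all_states K N" "s k' \<in> all_states K N"
      using all_statesI[where N=N, OF k(2) comp(1)] all_statesI[where N=N, OF k'(1) comp(2)] .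
    ultimately have "\<rho> (s k) \<noteq> \<rho> (s k')" using inj by (auto dest: inj_onD)
    with \<open>\<rho> (s k) \<le> \<rho> (s k')\<close> show ?thesis by simp
  qed
  have "priority_arm K \<rho> s = k" by (rule priority_arm_eqI[where s=s and \<rho>=\<rho>, OF k(2) less])
  then show "priority_arm K \<rho> s \<in> {1..K}"
    and "\<And>k'. k' \<in> {1..K} \<Longrightarrow> k' \<noteq> priority_arm K \<rho> s \<Longrightarrow> \<rho> (s (priority_arm K \<rho> s)) < \<rho> (s k')"
    using k(2) less by auto
qed

lemma self_loop_lt_1:
  assumes k: "k \<in> {1..K}" and i: "i \<in> N k"
  shows "q i i < 1"
proof (rule ccontr)
  assume "\<not> q i i < 1"
  have "(\<Sum>j\<in>N k. q i j) = q i i + (\<Sum>j\<in>N k - {i}. q i j)"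
    using sum.remove[OF finite_arm[OF k] i] .
  moreover have "0 \<le> q i j" if "j \<in> N k" for j using q_nonneg[OF k i that] .
  ultimately have "(\<Sum>j\<in>N k - {i}. q i j) = 0" "(\<Sum>j\<in>N k. q i j) = 1"
    using q_substochastic[OF k i] \<open>\<not> q i i < 1\<close> sum_nonneg[of "N k - {i}" "q i"] by force+
  then have "\<forall>j\<in>N k - {i}. q i j = 0"
    using sum_nonneg_eq_0_iff[of "N k - {i}" "q i"] finite_arm[OF k] q_nonneg[OF k i] by auto
  then have "closed_class (N k) q {i}"
    unfolding closed_class_def using i \<open>(\<Sum>j\<in>N k. q i j) = 1\<close> by force
  then show False using no_closed_class[OF k] by blast
qed

end

locale top_index_state = bandit_system +
  fixes g :: "'a \<Rightarrow> real" and ks :: nat and i0 :: 'a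
  assumes ks: "ks \<in> {1..K}" and i0: "i0 \<in> N ks"
    \<comment> \<open>i0 maximizes the ratio g i / (1 - \<Sum>j. q i j) of reward to stopping probability;
      cross-multiplied because the stopping probability may vanish.\<close>
    and top_index: "\<And>k a. k \<in> {1..K} \<Longrightarrow> a \<in> N k \<Longrightarrow>
      g a * (1 - (\<Sum>j\<in>N ks. q i0 j)) \<le> g i0 * (1 - (\<Sum>j\<in>N k. q a j))"
begin

definition exit_prob :: real where
  "exit_prob = 1 - q i0 i0"

text \<open>Eliminating i0: on entering i0 the process loops there a geometric number of times,
  collecting g i0 / exit_prob in expectation, and then moves on to j with probability
  q i0 j / exit_prob.\<close>

definition reduced_N :: "nat \<Rightarrow> 'a set" where
  "reduced_N = N(ks := N ks - {i0})"

definition reduced_q :: "'a \<Rightarrow> 'a \<Rightarrow> real" where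
  "reduced_q i j = (if i \<in> N ks \<and> j \<in> N ks then q i j + q i i0 * q i0 j / exit_prob else q i j)"

definition reduced_g :: "'a \<Rightarrow> real" where
  "reduced_g i = (if i \<in> N ks then g i + q i i0 * g i0 / exit_prob else g i)"

definition lifted :: "((nat \<Rightarrow> 'a) \<Rightarrow> real) \<Rightarrow> (nat \<Rightarrow> 'a) \<Rightarrow> real" where
  "lifted V' s = (if s ks = i0
     then (g i0 + (\<Sum>j\<in>N ks - {i0}. q i0 j * V' (s(ks := j)))) / exit_prob else V' s)"

definition i0_first :: "('a \<Rightarrow> nat) \<Rightarrow> 'a \<Rightarrow> nat" where
  "i0_first \<rho>' i = (if i = i0 then 0 else Suc (\<rho>' i))"

lemma exit_prob_pos: "0 < exit_prob"
  using self_loop_lt_1[OF ks i0] unfolding exit_prob_def by simp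

lemma finite_ks: "finite (N ks)"
  using finite_arm[OF ks] .

lemma reduced_N_arm: "reduced_N k = (if k = ks then N ks - {i0} else N k)"
  unfolding reduced_N_def by simp

lemma reduced_q_other: "k \<in> {1..K} \<Longrightarrow> k \<noteq> ks \<Longrightarrow> i \<in> N k \<Longrightarrow> reduced_q i j = q i j"
  using notin_other_arm[OF _ ks] unfolding reduced_q_def by auto

lemma reduced_q_ge: "i \<in> N ks \<Longrightarrow> j \<in> N ks \<Longrightarrow> q i j \<le> reduced_q i j"
  unfolding reduced_q_def using q_nonneg[OF ks] i0 exit_prob_pos by simp

lemma stop_prob_i0_nonneg: "0 \<le> 1 - (\<Sum>j\<in>N ks. q i0 j)"
  using q_substochastic[OF ks i0] by simp

lemma reduced_mass:
  assumes i: "i \<in> N ks"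
  shows "(\<Sum>j\<in>N ks - {i0}. reduced_q i j)
    = (\<Sum>j\<in>N ks. q i j) - q i i0 * (1 - (\<Sum>j\<in>N ks. q i0 j)) / exit_prob"
proof -
  have split: "(\<Sum>j\<in>N ks. f j) = f i0 + (\<Sum>j\<in>N ks - {i0}. f j)" for f :: "'a \<Rightarrow> real"
    using sum.remove[OF finite_ks i0] .
  have "(\<Sum>j\<in>N ks - {i0}. reduced_q i j)
      = (\<Sum>j\<in>N ks - {i0}. q i j) + q i i0 * (\<Sum>j\<in>N ks - {i0}. q i0 j) / exit_prob"
    using i by (simp add: reduced_q_def sum.distrib sum_distrib_left sum_divide_distrib)
  also have "\<dots> = (\<Sum>j\<in>N ks. q i j) - q i i0 * (1 - (\<Sum>j\<in>N ks. q i0 j)) / exit_prob"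
    using exit_prob_pos unfolding split[of "q i"] split[of "q i0"] exit_prob_def
    by (simp add: field_simps)
  finally show ?thesis .
qed

lemma full_mass_if_reduced_full_mass:
  assumes x: "x \<in> N ks" and mass: "(\<Sum>j\<in>N ks - {i0}. reduced_q x j) = 1"
  shows "(\<Sum>j\<in>N ks. q x j) = 1" and "q x i0 * (1 - (\<Sum>j\<in>N ks. q i0 j)) = 0"
proof -
  have "0 \<le> q x i0 * (1 - (\<Sum>j\<in>N ks. q i0 j)) / exit_prob"
    using q_nonneg[OF ks x i0] stop_prob_i0_nonneg exit_prob_pos by simp
  then have "(\<Sum>j\<in>N ks. q x j) = 1" and "q x i0 * (1 - (\<Sum>j\<in>N ks. q i0 j)) / exit_prob = 0"
    using mass reduced_mass[OF x] q_substochastic[OF ks x] by linarith+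
  then show "(\<Sum>j\<in>N ks. q x j) = 1" and "q x i0 * (1 - (\<Sum>j\<in>N ks. q i0 j)) = 0"
    using exit_prob_pos by simp_all
qed

lemma closed_class_unreduced:
  assumes cl: "closed_class (N ks - {i0}) reduced_q A"
  shows "closed_class (N ks) q (A \<union> {j. j = i0 \<and> (\<exists>x\<in>A. 0 < q x i0)})" (is "closed_class _ _ ?A'")
  unfolding closed_class_def
proof (intro conjI ballI impI)
  have A: "A \<subseteq> N ks - {i0}" "A \<noteq> {}"
    and mass: "\<And>x. x \<in> A \<Longrightarrow> (\<Sum>j\<in>N ks - {i0}. reduced_q x j) = 1"
    and succ: "\<And>x j. x \<in> A \<Longrightarrow> j \<in> N ks - {i0} \<Longrightarrow> 0 < reduced_q x j \<Longrightarrow> j \<in> A"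
    using cl unfolding closed_class_def by auto
  note full = full_mass_if_reduced_full_mass[OF _ mass]
  show "?A' \<subseteq> N ks" "?A' \<noteq> {}" using A i0 by auto
  fix x assume x: "x \<in> ?A'"
  show "(\<Sum>j\<in>N ks. q x j) = 1"
  proof (cases "x \<in> A")
    case False
    then obtain x0 where x0: "x0 \<in> A" "0 < q x0 i0" and "x = i0" using x by blast
    then show ?thesis using full[of x0] A by auto
  qed (use full A in blast)
  fix j assume j: "j \<in> N ks" and pos: "0 < q x j"
  show "j \<in> ?A'"
  proof (cases "j = i0")
    case j_ne: False
    show ?thesis
    proof (cases "x \<in> A")
      case True
      then show ?thesis using succ[of x j] j j_ne pos reduced_q_ge[of x j] A by force
    next
      case False
      then obtain x0 where x0: "x0 \<in> A" "0 < q x0 i0" and "x = i0" using x by blast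
      have "0 < q x0 i0 * q i0 j / exit_prob"
        using x0(2) pos \<open>x = i0\<close> exit_prob_pos by simp
      moreover have "0 \<le> q x0 j" using q_nonneg[OF ks _ j] x0(1) A by blast
      ultimately have "0 < reduced_q x0 j"
        unfolding reduced_q_def using x0(1) A j by auto
      then show ?thesis using succ[OF x0(1)] j j_ne by blast
    qed
  qed (use x pos in auto)
qed

lemma reduced_no_closed_class:
  assumes k: "k \<in> {1..K}"
  shows "\<not> closed_class (reduced_N k) reduced_q A"
proof
  assume cl: "closed_class (reduced_N k) reduced_q A"
  show False
  proof (cases "k = ks")
    case False
    then have "A \<subseteq> N k" using cl unfolding closed_class_def reduced_N_arm by simp
    then have "reduced_q x = q x" if "x \<in> A" for x
      using reduced_q_other[OF k False] that by blast
    then have "closed_class (N k) q A"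
      using cl False unfolding closed_class_def reduced_N_arm by (simp cong: ball_cong)
    then show False using no_closed_class[OF k] by blast
  next
    case True
    then show False
      using closed_class_unreduced cl no_closed_class[OF ks] by (simp add: reduced_N_arm)
  qed
qed

lemma reduced_bandit_system:
  assumes "N ks \<noteq> {i0}"
  shows "bandit_system K reduced_N reduced_q"
proof
  fix k assume k: "k \<in> {1..K}"
  show "finite (reduced_N k)" using finite_arm[OF k] finite_ks by (simp add: reduced_N_arm)
  show "reduced_N k \<noteq> {}" using arm_nonempty[OF k] assms i0 by (auto simp: reduced_N_arm)
  show "\<not> closed_class (reduced_N k) reduced_q A" for A by (rule reduced_no_closed_class[OF k])
  fix i assume i: "i \<in> reduced_N k"
  show "0 \<le> reduced_q i j" if j: "j \<in> reduced_N k" for j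
  proof (cases "k = ks")
    case True
    then show ?thesis
      using i j reduced_q_ge[of i j] q_nonneg[OF ks, of i j] by (force simp: reduced_N_arm)
  qed (use i j q_nonneg[OF k] reduced_q_other[OF k] in \<open>auto simp: reduced_N_arm\<close>)
  show "(\<Sum>j\<in>reduced_N k. reduced_q i j) \<le> 1"
  proof (cases "k = ks")
    case True
    then have iN: "i \<in> N ks" using i by (simp add: reduced_N_arm)
    have "0 \<le> q i i0 * (1 - (\<Sum>j\<in>N ks. q i0 j)) / exit_prob"
      using q_nonneg[OF ks iN i0] stop_prob_i0_nonneg exit_prob_pos by simp
    then show ?thesis
      using True reduced_mass[OF iN] q_substochastic[OF ks iN] by (simp add: reduced_N_arm)
  qed (use i q_substochastic[OF k] reduced_q_other[OF k] in \<open>auto simp: reduced_N_arm\<close>)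
qed (use K_pos arms_disjoint in \<open>auto simp: reduced_N_def\<close>)

lemma all_states_reduced: "all_states K reduced_N = all_states K N - {i0}"
proof -
  have "i0 \<notin> N k" if "k \<in> {1..K}" "k \<noteq> ks" for k
    using notin_other_arm[OF ks that(1)] that(2) i0 by blast
  then show ?thesis using ks unfolding all_states_def reduced_N_def by auto
qed

lemma card_all_states_reduced: "card (all_states K reduced_N) < card (all_states K N)"
  unfolding all_states_reduced
  using finite_all_states all_statesI[where N=N, OF ks i0] by (rule card_Diff1_less)

lemma multistates_reduced:
  "s \<in> multistates K N \<Longrightarrow> s ks \<noteq> i0 \<Longrightarrow> s \<in> multistates K reduced_N"
  unfolding multistates_def reduced_N_def by (auto simp: PiE_iff)

lemma lifted_off: "s ks \<noteq> i0 \<Longrightarrow> lifted V' s = V' s"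
  unfolding lifted_def by simp

lemma lifted_on:
  "s ks = i0 \<Longrightarrow> lifted V' s = (g i0 + (\<Sum>j\<in>N ks - {i0}. q i0 j * V' (s(ks := j)))) / exit_prob"
  unfolding lifted_def by simp

lemma play_value_lifted:
  assumes s: "s \<in> multistates K N" and s_ne: "s ks \<noteq> i0" and k: "k \<in> {1..K}"
  shows "play_value N q g (lifted V') s k = play_value reduced_N reduced_q reduced_g V' s k"
proof (cases "k = ks")
  case False
  have sk: "s k \<in> N k" "s k \<notin> N ks"
    using notin_other_arm[OF k ks False] multistates_component[OF s k] by auto
  have "play_value N q g (lifted V') s k = play_value N q g V' s k"
    using False s_ne by (intro play_value_cong) (simp add: lifted_off)
  also have "\<dots> = play_value reduced_N reduced_q reduced_g V' s k"
    unfolding play_value_def reduced_N_arm using False sk reduced_q_other[OF k False sk(1)]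
    by (simp add: reduced_g_def)
  finally show ?thesis .
next
  case True
  define x where "x = s ks"
  have x: "x \<in> N ks" "x \<noteq> i0" using multistates_component[OF s ks] s_ne unfolding x_def by auto
  define S where "S = (\<Sum>j\<in>N ks - {i0}. q i0 j * V' (s(ks := j)))"
  have off: "(\<Sum>j\<in>N ks - {i0}. q x j * lifted V' (s(ks := j))) = (\<Sum>j\<in>N ks - {i0}. q x j * V' (s(ks := j)))"
    by (intro sum.cong) (auto simp: lifted_off)
  have at_i0: "lifted V' (s(ks := i0)) = (g i0 + S) / exit_prob"
    unfolding S_def by (simp add: lifted_on)
  have via_i0: "q x i0 * ((g i0 + S) / exit_prob)
      = q x i0 * g i0 / exit_prob + (\<Sum>j\<in>N ks - {i0}. q x i0 * q i0 j / exit_prob * V' (s(ks := j)))"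
    unfolding S_def by (simp add: add_divide_distrib distrib_left sum_distrib_left sum_divide_distrib mult.assoc)
  have red: "(\<Sum>j\<in>N ks - {i0}. reduced_q x j * V' (s(ks := j)))
      = (\<Sum>j\<in>N ks - {i0}. q x j * V' (s(ks := j)) + q x i0 * q i0 j / exit_prob * V' (s(ks := j)))"
    using x by (intro sum.cong) (auto simp: reduced_q_def distrib_right)
  have "play_value N q g (lifted V') s ks
      = g x + (q x i0 * ((g i0 + S) / exit_prob) + (\<Sum>j\<in>N ks - {i0}. q x j * V' (s(ks := j))))"
    unfolding play_value_def x_def[symmetric] sum.remove[OF finite_ks i0] off at_i0 ..
  also have "\<dots> = play_value reduced_N reduced_q reduced_g V' s ks"
    unfolding via_i0 play_value_def x_def[symmetric] using x
    by (simp add: reduced_N_arm red reduced_g_def sum.distrib)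
  finally show ?thesis using True by simp
qed

lemma lifted_play_i0:
  assumes s_i0: "s ks = i0"
  shows "play_value N q g (lifted V') s ks = lifted V' s"
proof -
  define S where "S = (\<Sum>j\<in>N ks - {i0}. q i0 j * V' (s(ks := j)))"
  have off: "(\<Sum>j\<in>N ks - {i0}. q i0 j * lifted V' (s(ks := j))) = S"
    unfolding S_def by (intro sum.cong) (auto simp: lifted_off)
  have "s(ks := i0) = s" using s_i0 by auto
  then have "play_value N q g (lifted V') s ks = g i0 + (q i0 i0 * lifted V' s + S)"
    unfolding play_value_def s_i0 sum.remove[OF finite_ks i0] off by simp
  also have "\<dots> = lifted V' s"
    using exit_prob_pos unfolding lifted_on[where s=s and V'=V', OF s_i0] S_def[symmetric] exit_prob_def
    by (simp add: field_simps)
  finally show ?thesis .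
qed

lemma index_inequality:
  assumes k: "k \<in> {1..K}" and a: "a \<in> N k"
  shows "g a + (\<Sum>j\<in>N k. q a j) * (g i0 / exit_prob)
    \<le> g i0 / exit_prob + (\<Sum>j\<in>N ks - {i0}. q i0 j / exit_prob) * g a"
proof -
  let ?d0 = "1 - (\<Sum>j\<in>N ks. q i0 j)"
  have P: "(\<Sum>j\<in>N ks - {i0}. q i0 j / exit_prob) = (exit_prob - ?d0) / exit_prob"
    using sum.remove[OF finite_ks i0, of "q i0"]
    by (simp add: sum_divide_distrib[symmetric] exit_prob_def)
  have "0 \<le> (g i0 * (1 - (\<Sum>j\<in>N k. q a j)) - g a * ?d0) / exit_prob"
    using top_index[OF k a] exit_prob_pos by simp
  moreover have "g i0 / exit_prob + (exit_prob - ?d0) / exit_prob * g a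
      - (g a + (\<Sum>j\<in>N k. q a j) * (g i0 / exit_prob))
      = (g i0 * (1 - (\<Sum>j\<in>N k. q a j)) - g a * ?d0) / exit_prob"
    using exit_prob_pos by (simp add: field_simps)
  ultimately show ?thesis unfolding P by linarith
qed

lemma play_value_reduced_after_i0:
  assumes s: "s \<in> multistates K N" and k: "k \<in> {1..K}" "k \<noteq> ks"
  shows "play_value reduced_N reduced_q reduced_g V' (s(ks := y)) k
    = g (s k) + (\<Sum>x\<in>N k. q (s k) x * V' (s(k := x, ks := y)))"
proof -
  have "s k \<in> N k" "s k \<notin> N ks"
    using multistates_component[OF s k(1)] notin_other_arm[OF k(1) ks k(2)] by auto
  then show ?thesis
    unfolding play_value_def reduced_N_arm using k reduced_q_other[OF k]
    by (simp add: reduced_g_def fun_upd_twist)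
qed

lemma lifted_excessive_at_i0:
  assumes exc: "excessive K reduced_N reduced_q reduced_g V'"
    and s: "s \<in> multistates K N" and s_i0: "s ks = i0" and k: "k \<in> {1..K}" and k_ne: "k \<noteq> ks"
  shows "play_value N q g (lifted V') s k \<le> lifted V' s"
proof -
  define a where "a = s k"
  define J where "J = N ks - {i0}"
  define h where "h = g i0 / exit_prob"
  define p where "p j = q i0 j / exit_prob" for j
  define W where "W x y = V' (s(k := x, ks := y))" for x y
  have p_nonneg: "0 \<le> p j" if "j \<in> J" for j
    using q_nonneg[OF ks i0] that exit_prob_pos unfolding p_def J_def by simp
  have lifted_k: "lifted V' (s(k := x)) = h + (\<Sum>y\<in>J. p y * W x y)" for x
    using s_i0 k_ne unfolding lifted_def p_def W_def h_def J_def
    by (simp add: add_divide_distrib sum_divide_distrib)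
  have reduced_step: "g a + (\<Sum>x\<in>N k. q a x * W x y) \<le> V' (s(ks := y))" if "y \<in> J" for y
  proof -
    have "s(ks := y) \<in> multistates K reduced_N"
      using multistates_reduced[OF multistates_upd[OF s ks]] that unfolding J_def by auto
    then have "play_value reduced_N reduced_q reduced_g V' (s(ks := y)) k \<le> V' (s(ks := y))"
      using exc k unfolding excessive_def by blast
    then show ?thesis unfolding play_value_reduced_after_i0[OF s k k_ne] a_def W_def .
  qed
  have swap: "(\<Sum>x\<in>N k. \<Sum>y\<in>J. q a x * (p y * W x y)) = (\<Sum>y\<in>J. p y * (\<Sum>x\<in>N k. q a x * W x y))"
    by (subst sum.swap) (simp add: sum_distrib_left mult.left_commute)
  have "play_value N q g (lifted V') s k = g a + (\<Sum>x\<in>N k. q a x * (h + (\<Sum>y\<in>J. p y * W x y)))"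
    unfolding play_value_def a_def[symmetric] lifted_k ..
  also have "\<dots> = g a + (\<Sum>x\<in>N k. q a x) * h + (\<Sum>y\<in>J. p y * (\<Sum>x\<in>N k. q a x * W x y))"
    unfolding swap[symmetric] by (simp add: distrib_left sum.distrib sum_distrib_left sum_distrib_right)
  also have "\<dots> \<le> h + (\<Sum>y\<in>J. p y) * g a + (\<Sum>y\<in>J. p y * (\<Sum>x\<in>N k. q a x * W x y))"
    using index_inequality[OF k multistates_component[OF s k]] unfolding h_def p_def J_def a_def by simp
  also have "\<dots> = h + (\<Sum>y\<in>J. p y * (g a + (\<Sum>x\<in>N k. q a x * W x y)))"
    by (simp add: distrib_left sum.distrib sum_distrib_right)
  also have "\<dots> \<le> h + (\<Sum>y\<in>J. p y * V' (s(ks := y)))"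
    using reduced_step p_nonneg by (intro add_left_mono sum_mono mult_left_mono) auto
  also have "\<dots> = lifted V' s"
    using s_i0 unfolding lifted_def p_def h_def J_def by (simp add: add_divide_distrib sum_divide_distrib)
  finally show ?thesis .
qed

lemma inj_on_i0_first:
  "inj_on \<rho>' (all_states K N - {i0}) \<Longrightarrow> inj_on (i0_first \<rho>') (all_states K N)"
  unfolding i0_first_def by (auto simp: inj_on_def)

lemma priority_arm_i0_first:
  assumes s: "s \<in> multistates K N" "s ks = i0"
  shows "priority_arm K (i0_first \<rho>') s = ks"
proof (rule priority_arm_eqI[OF ks])
  fix k' assume k': "k' \<in> {1..K}" "k' \<noteq> ks"
  then have "s k' \<noteq> i0"
    using notin_other_arm[OF ks k'(1)] multistates_component[OF s(1) k'(1)] i0 by metis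
  then show "i0_first \<rho>' (s ks) < i0_first \<rho>' (s k')"
    using s(2) unfolding i0_first_def by simp
qed

lemma single_state_solution:
  assumes single: "N ks = {i0}"
  shows "\<exists>\<rho> V. inj_on \<rho> (all_states K N) \<and> policy_value K N q g (priority_arm K \<rho>) V
    \<and> excessive K N q g V"
proof -
  obtain \<rho>' :: "'a \<Rightarrow> nat" where "inj_on \<rho>' (all_states K N)"
    using finite_imp_inj_to_nat_seg[OF finite_all_states] by blast
  then have inj: "inj_on (i0_first \<rho>') (all_states K N)" by (intro inj_on_i0_first inj_on_diff)
  define h where "h = g i0 / exit_prob"
  have play_const: "play_value N q g (\<lambda>_. h) s k = g (s k) + (\<Sum>j\<in>N k. q (s k) j) * h" for s k
    unfolding play_value_def by (simp add: sum_distrib_right)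
  have at_i0: "s ks = i0" if "s \<in> multistates K N" for s
    using multistates_component[OF that ks] single by simp
  have stay: "play_value N q g (\<lambda>_. h) s ks = h" if "s \<in> multistates K N" for s
    unfolding play_const single at_i0[OF that] using exit_prob_pos
    by (simp add: h_def exit_prob_def field_simps)
  have "policy_value K N q g (priority_arm K (i0_first \<rho>')) (\<lambda>_. h)"
    unfolding policy_value_def using stay priority_arm_i0_first at_i0 by simp
  moreover have "excessive K N q g (\<lambda>_. h)"
    unfolding excessive_def
  proof (intro ballI)
    fix s k assume s: "s \<in> multistates K N" and k: "k \<in> {1..K}"
    show "play_value N q g (\<lambda>_. h) s k \<le> h"
    proof (cases "k = ks")
      case False
      have "g (s k) + (\<Sum>j\<in>N k. q (s k) j) * h \<le> h"
        using index_inequality[OF k multistates_component[OF s k]] single unfolding h_def by simp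
      then show ?thesis unfolding play_const .
    qed (use stay[OF s] in simp)
  qed
  ultimately show ?thesis using inj by blast
qed

lemma lifted_policy_value:
  assumes several: "N ks \<noteq> {i0}"
    and inj': "inj_on \<rho>' (all_states K reduced_N)"
    and val': "policy_value K reduced_N reduced_q reduced_g (priority_arm K \<rho>') V'"
  shows "policy_value K N q g (priority_arm K (i0_first \<rho>')) (lifted V')"
  unfolding policy_value_def
proof
  interpret reduced: bandit_system K reduced_N reduced_q by (rule reduced_bandit_system[OF several])
  fix s assume s: "s \<in> multistates K N"
  show "lifted V' s = play_value N q g (lifted V') s (priority_arm K (i0_first \<rho>') s)"
  proof (cases "s ks = i0")
    case True
    then show ?thesis using lifted_play_i0[where s=s and V'=V'] priority_arm_i0_first[OF s] by simp
  next
    case False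
    have s': "s \<in> multistates K reduced_N" by (rule multistates_reduced[OF s False])
    have "s k \<noteq> i0" if "k \<in> {1..K}" for k
      using False notin_other_arm[OF ks that] multistates_component[OF s that] i0 by metis
    then have same_arm: "priority_arm K (i0_first \<rho>') s = priority_arm K \<rho>' s"
      using reduced.priority_arm[OF inj' s']
      by (intro priority_arm_eqI[where s=s]) (auto simp: i0_first_def)
    have "lifted V' s = V' s" using False by (rule lifted_off)
    also have "\<dots> = play_value reduced_N reduced_q reduced_g V' s (priority_arm K \<rho>' s)"
      using val' s' unfolding policy_value_def by blast
    also have "\<dots> = play_value N q g (lifted V') s (priority_arm K \<rho>' s)"
      using play_value_lifted[OF s False reduced.priority_arm(1)[OF inj' s']] by simp
    finally show ?thesis using same_arm by simp
  qed
qed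

lemma lifted_excessive:
  assumes exc': "excessive K reduced_N reduced_q reduced_g V'"
  shows "excessive K N q g (lifted V')"
  unfolding excessive_def
proof (intro ballI)
  fix s k assume s: "s \<in> multistates K N" and k: "k \<in> {1..K}"
  show "play_value N q g (lifted V') s k \<le> lifted V' s"
  proof (cases "s ks = i0")
    case False
    have s': "s \<in> multistates K reduced_N" by (rule multistates_reduced[OF s False])
    have "play_value N q g (lifted V') s k = play_value reduced_N reduced_q reduced_g V' s k"
      by (rule play_value_lifted[OF s False k])
    also have "\<dots> \<le> V' s" using exc' s' k unfolding excessive_def by blast
    finally show ?thesis using False by (simp add: lifted_off)
  next
    case s_i0: True
    show ?thesis
    proof (cases "k = ks")
      case False
      then show ?thesis by (rule lifted_excessive_at_i0[OF exc' s s_i0 k])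
    qed (use lifted_play_i0[where s=s and V'=V', OF s_i0] in simp)
  qed
qed

end

lemma (in bandit_system) exists_top_index_state: "\<exists>ks i0. top_index_state K N q g ks i0"
proof -
  define X where "X = Sigma {1..K} N"
  have "finite X" unfolding X_def using finite_arm by (intro finite_SigmaI) auto
  moreover have "X \<noteq> {}" unfolding X_def using arm_nonempty K_pos by fastforce
  moreover have "0 \<le> 1 - (\<Sum>j\<in>N k. q i j)" if "(k, i) \<in> X" for k i
    using q_substochastic that unfolding X_def by fastforce
  ultimately obtain p where p: "p \<in> X" and p_max: "\<forall>y\<in>X. (case y of (k, a) \<Rightarrow> g a) *
      (case p of (k, i) \<Rightarrow> 1 - (\<Sum>j\<in>N k. q i j)) \<le> (case p of (k, a) \<Rightarrow> g a) *
      (case y of (k, i) \<Rightarrow> 1 - (\<Sum>j\<in>N k. q i j))"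
    using exists_max_ratio[of X "\<lambda>(k, i). 1 - (\<Sum>j\<in>N k. q i j)" "\<lambda>(k, a). g a"] by auto
  obtain ks i0 where p_eq: "p = (ks, i0)" by fastforce
  have "top_index_state K N q g ks i0"
    by (rule top_index_state.intro[OF bandit_system_axioms], unfold_locales)
      (use p p_max in \<open>auto simp: X_def p_eq\<close>)
  then show ?thesis by blast
qed

theorem gittins_index_theorem:
  assumes "bandit_system K N q"
  shows "\<exists>\<rho> V. inj_on \<rho> (all_states K N) \<and> policy_value K N q g (priority_arm K \<rho>) V
    \<and> excessive K N q g V"
  using assms
proof (induction "card (all_states K N)" arbitrary: N q g rule: less_induct)
  case less
  interpret bandit_system K N q by (rule less.prems)
  obtain ks i0 where "top_index_state K N q g ks i0" using exists_top_index_state by blast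
  then interpret top_index_state K N q g ks i0 .
  show ?case
  proof (cases "N ks = {i0}")
    case True
    then show ?thesis by (rule single_state_solution)
  next
    case False
    obtain \<rho>' V' where "inj_on \<rho>' (all_states K reduced_N)"
      and "policy_value K reduced_N reduced_q reduced_g (priority_arm K \<rho>') V'"
      and "excessive K reduced_N reduced_q reduced_g V'"
      using less.hyps[OF card_all_states_reduced reduced_bandit_system[OF False]] by blast
    then have "inj_on (i0_first \<rho>') (all_states K N)"
      and "policy_value K N q g (priority_arm K (i0_first \<rho>')) (lifted V')"
      and "excessive K N q g (lifted V')"
      using inj_on_i0_first lifted_policy_value[OF False] lifted_excessive
      by (simp_all add: all_states_reduced)
    then show ?thesis by blast
  qed
qed

section \<open>Priority rules\<close>

definition rank_labeling :: "nat \<Rightarrow> (nat \<Rightarrow> 'a set) \<Rightarrow> ('a \<Rightarrow> nat) \<Rightarrow> 'a option \<Rightarrow> nat" where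
  "rank_labeling K N \<rho> = (\<lambda>x. case x of
      None \<Rightarrow> card (all_states K N) + 1
    | Some i \<Rightarrow> card {j\<in>all_states K N. \<rho> j < \<rho> i} + 1)"

lemma card_lower_ranks_less:
  fixes \<rho> :: "'a \<Rightarrow> nat"
  assumes "finite A" "x \<in> A"
  shows "card {j\<in>A. \<rho> j < \<rho> x} < card A"
proof -
  have "x \<notin> {j\<in>A. \<rho> j < \<rho> x}" by simp
  then have "{j\<in>A. \<rho> j < \<rho> x} \<subset> A" using assms(2) by blast
  then show ?thesis using assms(1) by (simp add: psubset_card_mono)
qed

lemma rank_labeling_less_iff:
  assumes fin: "finite (all_states K N)" and x: "x \<in> all_states K N" and y: "y \<in> all_states K N"
  shows "rank_labeling K N \<rho> (Some x) < rank_labeling K N \<rho> (Some y) \<longleftrightarrow> \<rho> x < \<rho> y"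
proof
  assume "\<rho> x < \<rho> y"
  then have "{j\<in>all_states K N. \<rho> j < \<rho> x} \<subset> {j\<in>all_states K N. \<rho> j < \<rho> y}" using x by auto
  then show "rank_labeling K N \<rho> (Some x) < rank_labeling K N \<rho> (Some y)"
    using fin by (simp add: rank_labeling_def psubset_card_mono)
next
  assume less: "rank_labeling K N \<rho> (Some x) < rank_labeling K N \<rho> (Some y)"
  show "\<rho> x < \<rho> y"
  proof (rule ccontr)
    assume "\<not> \<rho> x < \<rho> y"
    then have "{j\<in>all_states K N. \<rho> j < \<rho> y} \<subseteq> {j\<in>all_states K N. \<rho> j < \<rho> x}" by auto
    then show False using less fin by (simp add: rank_labeling_def card_mono leD)
  qed
qed

lemma labeling_rank_labeling:
  assumes fin: "finite (all_states K N)" and inj: "inj_on \<rho> (all_states K N)"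
  shows "labeling K N (rank_labeling K N \<rho>)"
  unfolding labeling_def
proof (intro conjI)
  let ?A = "all_states K N" and ?L = "rank_labeling K N \<rho>"
  show "inj_on ?L (insert None (Some ` ?A))"
  proof (rule inj_onI)
    fix a b assume a: "a \<in> insert None (Some ` ?A)" and b: "b \<in> insert None (Some ` ?A)"
      and eq: "?L a = ?L b"
    consider "a = None" "b = None" | x y where "a = Some x" "b = Some y" "x \<in> ?A" "y \<in> ?A"
      | x where "x \<in> ?A" "a = Some x \<and> b = None \<or> a = None \<and> b = Some x"
      using a b by blast
    then show "a = b"
    proof cases
      case (2 x y)
      then have "\<not> \<rho> x < \<rho> y" "\<not> \<rho> y < \<rho> x"
        using eq rank_labeling_less_iff[OF fin] by (metis less_irrefl)+
      then have "x = y" using inj 2 by (metis inj_onD linorder_neqE_nat)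
      then show ?thesis using 2 by simp
    next
      case (3 x)
      then show ?thesis using eq card_lower_ranks_less[OF fin, of x \<rho>]
        by (auto simp: rank_labeling_def)
    qed simp
  qed
  show "?L ` insert None (Some ` ?A) \<subseteq> {1..card ?A + 1}"
  proof -
    have "card {j\<in>?A. \<rho> j < \<rho> x} \<le> card ?A" if "x \<in> ?A" for x
      using card_lower_ranks_less[OF fin that] by (rule less_imp_le)
    then show ?thesis by (auto simp: rank_labeling_def)
  qed
  show "?L None = card ?A + 1" by (simp add: rank_labeling_def)
qed

lemma labeling_inj_on: "labeling K N L \<Longrightarrow> inj_on (\<lambda>i. L (Some i)) (all_states K N)"
  unfolding labeling_def inj_on_def by auto

lemma priority_rule_eq_priority_arm:
  "s \<in> multistates K N \<Longrightarrow> priority_rule K N L s = priority_arm K (\<lambda>i. L (Some i)) s"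
  unfolding priority_rule_def priority_arm_def by simp

context bandit_system
begin

lemma finite_policies: "finite (policies K N)"
  unfolding policies_def using finite_state_space by (intro finite_PiE) auto

lemma policies_funcset: "\<delta> \<in> policies K N \<Longrightarrow> \<delta> \<in> multistates K N \<rightarrow> {1..K}"
  unfolding policies_def by auto

lemma priority_rule_policy:
  assumes "labeling K N L"
  shows "priority_rule K N L \<in> policies K N"
proof -
  have "priority_rule K N L s \<in> {1..K}" if "s \<in> multistates K N" for s
    using priority_arm(1)[OF labeling_inj_on[OF assms] that] priority_rule_eq_priority_arm[OF that]
    by simp
  moreover have "priority_rule K N L \<in> extensional (multistates K N)"
    unfolding priority_rule_def by simp
  ultimately show ?thesis unfolding policies_def PiE_iff by blast
qed

lemma finite_priority_rules: "finite (priority_rules K N)"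
proof (rule finite_subset[OF _ finite_policies])
  show "priority_rules K N \<subseteq> policies K N"
    unfolding priority_rules_def using priority_rule_policy by blast
qed

lemma priority_rules_nonempty: "priority_rules K N \<noteq> {}"
proof -
  obtain \<rho> :: "'a \<Rightarrow> nat" where "inj_on \<rho> (all_states K N)"
    using finite_imp_inj_to_nat_seg[OF finite_all_states] by blast
  then have "labeling K N (rank_labeling K N \<rho>)" by (rule labeling_rank_labeling[OF finite_all_states])
  then show ?thesis unfolding priority_rules_def by blast
qed

lemma exists_optimal_priority_rule:
  "\<exists>\<pi>\<in>priority_rules K N. \<exists>V. policy_value K N q g \<pi> V \<and> excessive K N q g V"
proof -
  obtain \<rho> V where inj: "inj_on \<rho> (all_states K N)"
    and val: "policy_value K N q g (priority_arm K \<rho>) V" and exc: "excessive K N q g V"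
    using gittins_index_theorem[OF bandit_system_axioms] by blast
  define L where "L = rank_labeling K N \<rho>"
  have L: "labeling K N L" unfolding L_def by (rule labeling_rank_labeling[OF finite_all_states inj])
  have same_arm: "priority_rule K N L s = priority_arm K \<rho> s" if s: "s \<in> multistates K N" for s
  proof -
    have comp: "s k \<in> all_states K N" if "k \<in> {1..K}" for k
      using all_statesI[where N=N, OF that multistates_component[OF s that]] .
    show ?thesis
      unfolding priority_rule_eq_priority_arm[OF s] L_def
      using priority_arm[OF inj s] comp rank_labeling_less_iff[OF finite_all_states]
      by (intro priority_arm_eqI) auto
  qed
  have "policy_value K N q g (priority_rule K N L) V"
    using val same_arm unfolding policy_value_def by simp
  moreover have "priority_rule K N L \<in> priority_rules K N"
    unfolding priority_rules_def using L by blast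
  ultimately show ?thesis using exc by blast
qed

lemma priority_rule_dominates:
  assumes \<delta>: "\<delta> \<in> policies K N" and s: "s \<in> multistates K N"
  shows "\<exists>\<pi>\<in>priority_rules K N.
    (\<Sum>w\<in>Ws. c w * Vval K N q r w \<delta> s) \<le> (\<Sum>w\<in>Ws. c w * Vval K N q r w \<pi> s)"
proof -
  define g where "g i = (\<Sum>w\<in>Ws. c w * r w i)" for i
  obtain \<pi> V where \<pi>: "\<pi> \<in> priority_rules K N"
    and val: "policy_value K N q g \<pi> V" and exc: "excessive K N q g V"
    using exists_optimal_priority_rule by blast
  have \<pi>_funcset: "\<pi> \<in> multistates K N \<rightarrow> {1..K}"
    using \<pi> priority_rule_policy policies_funcset unfolding priority_rules_def by blast
  have "policy_value K N q g \<delta> (\<lambda>s. \<Sum>w\<in>Ws. c w * Vval K N q r w \<delta> s)"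
    unfolding g_def using Vval_policy_value[OF policies_funcset[OF \<delta>]] by (rule policy_value_lincomb)
  then have "(\<Sum>w\<in>Ws. c w * Vval K N q r w \<delta> s) \<le> V s"
    using policy_value_le_excessive[OF policies_funcset[OF \<delta>] _ exc s] by blast
  also have "V s = (\<Sum>w\<in>Ws. c w * Vval K N q r w \<pi> s)"
    using policy_value_unique[OF \<pi>_funcset val _ s]
      policy_value_lincomb[of Ws K N q r \<pi> "\<lambda>w. Vval K N q r w \<pi>" c, OF Vval_policy_value[OF \<pi>_funcset]]
    unfolding g_def by blast
  finally show ?thesis using \<pi> by blast
qed

lemma performance_in_priority_rule_hull:
  assumes \<delta>: "\<delta> \<in> policies K N" and s: "s \<in> multistates K N" and fin: "finite Ws"
  shows "\<exists>\<beta>. (\<forall>\<pi>\<in>priority_rules K N. 0 \<le> \<beta> \<pi>) \<and> sum \<beta> (priority_rules K N) = 1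
    \<and> (\<forall>w\<in>Ws. (\<Sum>\<pi>\<in>priority_rules K N. \<beta> \<pi> * Vval K N q r w \<pi> s) = Vval K N q r w \<delta> s)"
  by (intro convex_combination_if_not_separated[OF finite_priority_rules priority_rules_nonempty fin]
      priority_rule_dominates[OF \<delta> s])

end

theorem proposition7p1:
  fixes K W :: nat and N :: "nat \<Rightarrow> 'a set" and q :: "'a \<Rightarrow> 'a \<Rightarrow> real"
    and r :: "nat \<Rightarrow> 'a \<Rightarrow> real" and C :: "nat \<Rightarrow> real" and s_hat :: "nat \<Rightarrow> 'a"
  assumes fin: "\<forall>k\<in>{1..K}. finite (N k) \<and> N k \<noteq> {}"
    and disj: "\<forall>k\<in>{1..K}. \<forall>k'\<in>{1..K}. k \<noteq> k' \<longrightarrow> N k \<inter> N k' = {}"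
    and nonneg: "\<forall>k\<in>{1..K}. \<forall>i\<in>N k. \<forall>j\<in>N k. 0 \<le> q i j"
    and transient: "\<forall>k\<in>{1..K}. transient_on (N k) q"
    and substoch: "\<forall>k\<in>{1..K}. substochastic_on (N k) q"
    and s_hat: "s_hat \<in> multistates K N"
    and W: "W \<ge> 1"
    and prog1: "\<exists>\<alpha>. (\<forall>\<delta>\<in>policies K N. 0 \<le> \<alpha> \<delta>) \<and> (\<Sum>\<delta>\<in>policies K N. \<alpha> \<delta>) = 1 \<and>
        (\<forall>w\<in>{1..W}. (\<Sum>\<delta>\<in>policies K N. \<alpha> \<delta> * Vval K N q r w \<delta> s_hat) \<ge> C w)"
  shows "\<exists>\<alpha>. (\<forall>\<pi>\<in>priority_rules K N. 0 \<le> \<alpha> \<pi>) \<and> (\<Sum>\<pi>\<in>priority_rules K N. \<alpha> \<pi>) = 1 \<and>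
        (\<forall>w\<in>{1..W}. (\<Sum>\<pi>\<in>priority_rules K N. \<alpha> \<pi> * Vval K N q r w \<pi> s_hat) \<ge> C w)"
proof -
  obtain \<alpha> where \<alpha>_nonneg: "\<forall>\<delta>\<in>policies K N. 0 \<le> \<alpha> \<delta>" and \<alpha>_sum: "(\<Sum>\<delta>\<in>policies K N. \<alpha> \<delta>) = 1"
    and \<alpha>_C: "\<forall>w\<in>{1..W}. (\<Sum>\<delta>\<in>policies K N. \<alpha> \<delta> * Vval K N q r w \<delta> s_hat) \<ge> C w"
    using prog1 by blast
  have "policies K N \<noteq> {}" using \<alpha>_sum by auto
  then have "1 \<le> K" using s_hat unfolding policies_def by (auto simp: PiE_eq_empty_iff)
  then interpret bandit_system K N q
    using fin disj nonneg transient substoch by (rule bandit_system_if_transient)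
  let ?v = "\<lambda>\<pi> w. Vval K N q r w \<pi> s_hat"
  have "\<forall>\<delta>\<in>policies K N. \<exists>\<beta>. (\<forall>\<pi>\<in>priority_rules K N. 0 \<le> \<beta> \<pi>) \<and> sum \<beta> (priority_rules K N) = 1
      \<and> (\<forall>w\<in>{1..W}. (\<Sum>\<pi>\<in>priority_rules K N. \<beta> \<pi> * ?v \<pi> w) = ?v \<delta> w)"
    using performance_in_priority_rule_hull[OF _ s_hat finite_atLeastAtMost] by blast
  from bchoice[OF this] obtain \<beta> where "\<forall>\<delta>\<in>policies K N. (\<forall>\<pi>\<in>priority_rules K N. 0 \<le> \<beta> \<delta> \<pi>)
      \<and> sum (\<beta> \<delta>) (priority_rules K N) = 1
      \<and> (\<forall>w\<in>{1..W}. (\<Sum>\<pi>\<in>priority_rules K N. \<beta> \<delta> \<pi> * ?v \<pi> w) = ?v \<delta> w)"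
    by blast
  then have "\<exists>\<gamma>. (\<forall>\<pi>\<in>priority_rules K N. 0 \<le> \<gamma> \<pi>) \<and> sum \<gamma> (priority_rules K N) = 1
      \<and> (\<forall>w\<in>{1..W}. (\<Sum>\<pi>\<in>priority_rules K N. \<gamma> \<pi> * ?v \<pi> w) = (\<Sum>\<delta>\<in>policies K N. \<alpha> \<delta> * ?v \<delta> w))"
    by (intro convex_combination_of_convex_combinations[where \<beta>=\<beta>]) (use \<alpha>_nonneg \<alpha>_sum in auto)
  then show ?thesis using \<alpha>_C by auto
qed

end
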